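(* Let $\phi$ be a finite-range repulsive pair potential on $\mathbb{R}^d$ and let $\lambda>0$ be such that strong spatial mixing holds for all activity functions bounded by $\lambda$. Then $$p(\lambda)=\int_0^1\frac{\rho_{t\lambda}(0)}{t}\,dt,$$ where $\rho_{t\lambda}$ is the one-point density for the constant activity $t\lambda$ on $\mathbb{R}^d$.
   Context: $\phi$ symmetric, $\phi\ge0$, $\phi(x)=0$ for $\|x\|>r$; $H=\sum_{i<j}\phi(x_i-x_j)$; $Z_\Lambda(\lambda)=1+\sum_{k\ge1}\frac{\lambda^k}{k!}\int_{\Lambda^k}e^{-H}dx$; $p(\lambda)=\lim_n(2n)^{-d}\log Z_{[-n,n]^d}(\lambda)$. Strong spatial mixing for activities bounded by $\lambda$: there are $\alpha,\beta>0$ such that the total variation distance between the restrictions to bounded $\Lambda$ of Gibbs point processes $\mu_{\boldsymbol{\lambda}},\mu_{\boldsymbol{\lambda}'}$ (density $\prod\boldsymbol{\lambda}(x_i)e^{-H}/Z(\boldsymbol{\lambda})$) is at most $\alpha|\Lambda|e^{-\beta\,\mathrm{dist}(\Lambda,\supp(\boldsymbol{\lambda}-\boldsymbol{\lambda}'))}$ for all activity functions $\boldsymbol{\lambda},\boldsymbol{\lambda}'\le\lambda$. $\rho_{\boldsymbol{\lambda}}(v)=\boldsymbol{\lambda}(v)\mathbb{E}_{\mu_{\boldsymbol{\lambda}}}e^{-\sum_{x\in\mathbf X}\phi(v-x)}$, extended to unbounded support by $\rho_{\boldsymbol{\lambda}}(v)=\lim_n\rho_{\boldsymbol{\lambda}\mathbf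 1_{B_n}}(v)$, $B_n$ the ball of radius $n$ at $0$. *)

theory Defs
  imports "HOL-Analysis.Analysis"
begin

text \<open>Configurations of k points in R^d are functions x :: nat => 'a restricted to {..<k},
  integrated against the product Lebesgue measure PiM {..<k} (%_. lborel).\<close>

definition pot_ok :: "('a::euclidean_space \<Rightarrow> real) \<Rightarrow> bool" where
  "pot_ok \<phi> \<longleftrightarrow> \<phi> \<in> borel_measurable borel \<and> (\<forall>x. \<phi> (- x) = \<phi> x) \<and> (\<forall>x. 0 \<le> \<phi> x)
     \<and> (\<exists>r. \<forall>x. norm x > r \<longrightarrow> \<phi> x = 0)"

definition ham :: "('a::euclidean_space \<Rightarrow> real) \<Rightarrow> nat \<Rightarrow> (nat \<Rightarrow> 'a) \<Rightarrow> real" where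
  "ham \<phi> k x = (\<Sum>j<k. \<Sum>i<j. \<phi> (x i - x j))"

definition Zbox :: "('a::euclidean_space \<Rightarrow> real) \<Rightarrow> 'a set \<Rightarrow> real \<Rightarrow> ennreal" where
  "Zbox \<phi> \<Lambda> lam = 1 + (\<Sum>n. ennreal (lam ^ Suc n / fact (Suc n)) *
      (\<integral>\<^sup>+ x. indicator (PiE {..<Suc n} (\<lambda>_. \<Lambda>)) x * ennreal (exp (- ham \<phi> (Suc n) x))
         \<partial>(PiM {..<Suc n} (\<lambda>_. lborel))))"

definition press_seq :: "('a::euclidean_space \<Rightarrow> real) \<Rightarrow> real \<Rightarrow> nat \<Rightarrow> real" where
  "press_seq \<phi> lam n =
     ln (enn2real (Zbox \<phi> (cbox (- (real n *\<^sub>R One)) (real n *\<^sub>R One)) lam)) / (2 * real n) ^ DIM('a)"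

text \<open>Gibbs weighted sum  g(empty) + sum_{k>=1} 1/k! int prod_i lam(x_i) e^{-H(x)} g_k(x) dx,
  so that the Gibbs expectation of g is gsum phi lam g / gsum phi lam 1.\<close>
definition gsum :: "('a::euclidean_space \<Rightarrow> real) \<Rightarrow> ('a \<Rightarrow> real) \<Rightarrow> (nat \<Rightarrow> (nat \<Rightarrow> 'a) \<Rightarrow> real) \<Rightarrow> ennreal" where
  "gsum \<phi> f g = ennreal (g 0 (\<lambda>_. undefined)) + (\<Sum>n. ennreal (1 / fact (Suc n)) *
      (\<integral>\<^sup>+ x. ennreal ((\<Prod>i<Suc n. f (x i)) * exp (- ham \<phi> (Suc n) x) * g (Suc n) x)
         \<partial>(PiM {..<Suc n} (\<lambda>_. lborel))))"

definition Zact :: "('a::euclidean_space \<Rightarrow> real) \<Rightarrow> ('a \<Rightarrow> real) \<Rightarrow> ennreal" where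
  "Zact \<phi> f = gsum \<phi> f (\<lambda>k x. 1)"

text \<open>Probability under the Gibbs point process mu_lambda that the restriction X cap Lambda
  of the configuration X lies in the event A (a set of finite point sets).\<close>
definition gibbs_prob :: "('a::euclidean_space \<Rightarrow> real) \<Rightarrow> ('a \<Rightarrow> real) \<Rightarrow> 'a set \<Rightarrow> 'a set set \<Rightarrow> real" where
  "gibbs_prob \<phi> f \<Lambda> A =
     enn2real (gsum \<phi> f (\<lambda>k x. indicator A (x ` {..<k} \<inter> \<Lambda>))) / enn2real (Zact \<phi> f)"

definition config_event :: "'a::euclidean_space set set \<Rightarrow> bool" where
  "config_event A \<longleftrightarrow> (\<forall>k::nat. {x \<in> space (PiM {..<k} (\<lambda>_. (lborel :: 'a measure))). x ` {..<k} \<in> A}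
                              \<in> sets (PiM {..<k} (\<lambda>_. (lborel :: 'a measure))))"

text \<open>Activity functions bounded by lambda (bounded support, so the Gibbs process is defined).\<close>
definition activity_le :: "real \<Rightarrow> ('a::euclidean_space \<Rightarrow> real) \<Rightarrow> bool" where
  "activity_le lam f \<longleftrightarrow> f \<in> borel_measurable borel \<and> (\<forall>x. 0 \<le> f x \<and> f x \<le> lam)
      \<and> bounded {x. f x \<noteq> 0}"

text \<open>Strong spatial mixing for activities bounded by lambda (total variation distance of the
  restrictions to Lambda written out as the supremum over events).\<close>
definition ssm :: "('a::euclidean_space \<Rightarrow> real) \<Rightarrow> real \<Rightarrow> bool" where
  "ssm \<phi> lam \<longleftrightarrow> (\<exists>\<alpha>>0. \<exists>\<beta>>0. \<forall>f g \<Lambda> A.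
      activity_le lam f \<longrightarrow> activity_le lam g \<longrightarrow> \<Lambda> \<in> sets lborel \<longrightarrow> bounded \<Lambda> \<longrightarrow>
      config_event A \<longrightarrow>
      \<bar>gibbs_prob \<phi> f \<Lambda> A - gibbs_prob \<phi> g \<Lambda> A\<bar>
        \<le> \<alpha> * measure lborel \<Lambda> * exp (- \<beta> * setdist \<Lambda> (closure {x. f x \<noteq> g x})))"

definition rho_fin :: "('a::euclidean_space \<Rightarrow> real) \<Rightarrow> ('a \<Rightarrow> real) \<Rightarrow> 'a \<Rightarrow> real" where
  "rho_fin \<phi> f v = f v *
     (enn2real (gsum \<phi> f (\<lambda>k x. exp (- (\<Sum>i<k. \<phi> (v - x i))))) / enn2real (Zact \<phi> f))"

definition rho :: "('a::euclidean_space \<Rightarrow> real) \<Rightarrow> ('a \<Rightarrow> real) \<Rightarrow> 'a \<Rightarrow> real" where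
  "rho \<phi> f v = (if bounded {x. f x \<noteq> 0} then rho_fin \<phi> f v
      else lim (\<lambda>n. rho_fin \<phi> (\<lambda>x. f x * indicator (ball 0 (real n)) x) v))"

end

(*
  For a bounded region the activity-dependent partition function Z(s) is a power series with
  Z(0) = 1, so its log-pressure is the integral of the logarithmic derivative of t \<mapsto> Z(t\<lambda>)
  over [0, 1].  Inserting one extra point into the configuration integrals shows that
  s Z'(s) / Z(s) is the integral over the region of the one-point density of the activity
  s \<cdot> 1_region.  Strong spatial mixing makes this finite-volume density exponentially close to
  the infinite-volume density \<rho>_s(0) at every point whose distance to the boundary is large
  (translation invariance moves the point to the origin, and the same estimate shows that the
  densities of the activities s \<cdot> 1_(ball 0 m) form a Cauchy sequence).  Hence the box averages
  of the density converge to \<rho>_s(0); they are bounded by s, and dominated convergence yields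
  the formula for the pressure.
*)

theory Submission
  imports Defs
begin

section \<open>Configurations and Gibbs sums\<close>

lemma product_sigma_finite_lborel:
  "product_sigma_finite (\<lambda>_::'i. (lborel::'a::euclidean_space measure))"
  by (simp add: product_sigma_finite_def lborel.sigma_finite_measure_axioms)

lemma distr_PiM_lborel_translate:
  fixes v :: "'a::euclidean_space" and I :: "'i set"
  assumes "finite I"
  shows "distr (PiM I (\<lambda>_. lborel)) (PiM I (\<lambda>_. lborel)) (\<lambda>x. restrict (\<lambda>i. v + x i) I)
     = PiM I (\<lambda>_. (lborel::'a measure))"
proof (rule product_sigma_finite.PiM_eqI[OF product_sigma_finite_lborel assms])
  fix A assume A: "\<And>i. i \<in> I \<Longrightarrow> A i \<in> sets (lborel::'a measure)"
  let ?T = "\<lambda>x. restrict (\<lambda>i. v + x i) I"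
  have translate_sets: "(+) v -` A i \<in> sets borel" if "i \<in> I" for i
  proof -
    have "(+) v \<in> borel_measurable (borel::'a measure)" by simp
    from measurable_sets[OF this, of "A i"] A[OF that] show ?thesis by simp
  qed
  have translate_measure: "emeasure lborel ((+) v -` A i) = emeasure lborel (A i)" if "i \<in> I" for i
  proof -
    have "emeasure (distr lborel borel ((+) v)) (A i) = emeasure lborel ((+) v -` A i \<inter> space lborel)"
      using A[OF that] by (intro emeasure_distr) auto
    then show ?thesis by (simp add: lborel_distr_plus)
  qed
  have "?T \<in> PiM I (\<lambda>_. lborel) \<rightarrow>\<^sub>M PiM I (\<lambda>_. (lborel::'a measure))"
    by measurable
  then have "emeasure (distr (PiM I (\<lambda>_. lborel)) (PiM I (\<lambda>_. lborel)) ?T) (Pi\<^sub>E I A)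
      = emeasure (PiM I (\<lambda>_. lborel)) (?T -` Pi\<^sub>E I A \<inter> space (PiM I (\<lambda>_. lborel)))"
    using A assms by (intro emeasure_distr) (auto intro!: sets_PiM_I_finite)
  also have "?T -` Pi\<^sub>E I A \<inter> space (PiM I (\<lambda>_. lborel)) = Pi\<^sub>E I (\<lambda>i. (+) v -` A i)"
    by (auto simp: space_PiM PiE_def Pi_def extensional_def)
  also have "emeasure (PiM I (\<lambda>_. lborel)) (Pi\<^sub>E I (\<lambda>i. (+) v -` A i)) = (\<Prod>i\<in>I. emeasure lborel ((+) v -` A i))"
    using assms translate_sets by (intro product_sigma_finite.emeasure_PiM[OF product_sigma_finite_lborel]) auto
  also have "\<dots> = (\<Prod>i\<in>I. emeasure lborel (A i))"
    by (intro prod.cong refl translate_measure)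
  finally show "emeasure (distr (PiM I (\<lambda>_. lborel)) (PiM I (\<lambda>_. lborel)) ?T) (Pi\<^sub>E I A)
      = (\<Prod>i\<in>I. emeasure lborel (A i))" .
qed simp

lemma nn_integral_PiM_lborel_indicator_PiE:
  fixes C :: "'a::euclidean_space set" and I :: "'i set"
  assumes "finite I" "C \<in> sets borel"
  shows "(\<integral>\<^sup>+ x. indicator (PiE I (\<lambda>_. C)) x \<partial>(PiM I (\<lambda>_. lborel))) = emeasure lborel C ^ card I"
proof -
  have "PiE I (\<lambda>_. C) \<in> sets (PiM I (\<lambda>_. (lborel::'a measure)))"
    using assms by (intro sets_PiM_I_finite) auto
  then have "(\<integral>\<^sup>+ x. indicator (PiE I (\<lambda>_. C)) x \<partial>(PiM I (\<lambda>_. lborel)))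
      = emeasure (PiM I (\<lambda>_. lborel)) (PiE I (\<lambda>_. C))"
    by simp
  also have "\<dots> = (\<Prod>i\<in>I. emeasure lborel C)"
    using assms by (intro product_sigma_finite.emeasure_PiM[OF product_sigma_finite_lborel]) auto
  finally show ?thesis by simp
qed

lemma prod_indicator_eq_indicator_PiE:
  assumes "finite I" "x \<in> space (PiM I M)"
  shows "(\<Prod>i\<in>I. indicator C (x i) :: real) = indicator (PiE I (\<lambda>_. C)) x"
proof (cases "\<forall>i\<in>I. x i \<in> C")
  case True
  with assms show ?thesis by (auto simp: space_PiM PiE_def indicator_def extensional_def)
next
  case False
  then obtain i where "i \<in> I" "x i \<notin> C" by auto
  then have "(\<Prod>i\<in>I. indicator C (x i) :: real) = 0"
    using assms(1) by (intro prod_zero) (auto intro!: bexI[of _ i])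
  with False show ?thesis by (auto simp: PiE_def indicator_def)
qed

lemma pred_PiM_lborel_components_eq:
  assumes "i \<in> I" "j \<in> I"
  shows "Measurable.pred (PiM I (\<lambda>_. (lborel::'a::euclidean_space measure))) (\<lambda>x. x i = x j)"
proof -
  have "(\<lambda>x. x i - x j) \<in> borel_measurable (PiM I (\<lambda>_. (lborel::'a measure)))"
    using assms by measurable
  then have "Measurable.pred (PiM I (\<lambda>_. (lborel::'a measure))) (\<lambda>x. x i - x j = 0)"
    by measurable
  then show ?thesis by simp
qed

lemma AE_PiM_lborel_components_neq:
  assumes "finite I" "i \<in> I" "j \<in> I" "i \<noteq> j"
  shows "AE x in PiM I (\<lambda>_. (lborel::'a::euclidean_space measure)). x i \<noteq> x j"
proof -
  let ?P = "PiM I (\<lambda>_. (lborel::'a measure))"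
  let ?diag = "{x \<in> space ?P. x i = x j}"
  have I: "insert i (I - {i}) = I" using assms by auto
  have [measurable]: "Measurable.pred ?P (\<lambda>x. x i = x j)"
    using assms by (intro pred_PiM_lborel_components_eq)
  have "emeasure ?P ?diag = (\<integral>\<^sup>+ x. indicator ?diag x \<partial>?P)"
    by (rule nn_integral_indicator[symmetric]) measurable
  also have "\<dots> = (\<integral>\<^sup>+ x. (\<integral>\<^sup>+ y. indicator ?diag (x(i := y)) \<partial>lborel) \<partial>(PiM (I - {i}) (\<lambda>_. lborel)))"
    using product_sigma_finite.product_nn_integral_insert[OF product_sigma_finite_lborel,
        of "I - {i}" i "indicator ?diag"] assms unfolding I by simp
  also have "\<dots> = (\<integral>\<^sup>+ x. 0 \<partial>(PiM (I - {i}) (\<lambda>_. (lborel::'a measure))))"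
  proof (rule nn_integral_cong)
    fix x
    have "(\<integral>\<^sup>+ y. indicator ?diag (x(i := y)) \<partial>lborel) \<le> (\<integral>\<^sup>+ y. indicator {x j} y \<partial>(lborel::'a measure))"
      using assms by (intro nn_integral_mono) (auto simp: indicator_def)
    then show "(\<integral>\<^sup>+ y. indicator ?diag (x(i := y)) \<partial>lborel) = 0" by simp
  qed
  finally show ?thesis by (intro AE_I[where N="?diag"]) auto
qed

lemma AE_PiM_lborel_inj_on:
  assumes "finite I"
  shows "AE x in PiM I (\<lambda>_. (lborel::'a::euclidean_space measure)). inj_on x I"
proof -
  have "AE x in PiM I (\<lambda>_. (lborel::'a measure)). \<forall>i\<in>I. \<forall>j\<in>I. i \<noteq> j \<longrightarrow> x i \<noteq> x j"
    using assms AE_PiM_lborel_components_neq[OF assms] by (intro AE_finite_allI) auto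
  then show ?thesis by eventually_elim (auto simp: inj_on_def)
qed

lemma borel_measurable_ham [measurable]:
  assumes [measurable]: "\<phi> \<in> borel_measurable borel"
  shows "ham \<phi> k \<in> borel_measurable (PiM {..<k} (\<lambda>_. (lborel::'a::euclidean_space measure)))"
  unfolding ham_def[abs_def] by measurable

lemma borel_measurable_prod_components [measurable]:
  fixes f :: "'a::euclidean_space \<Rightarrow> real"
  assumes [measurable]: "f \<in> borel_measurable borel"
  shows "(\<lambda>x. \<Prod>i<k. f (x i)) \<in> borel_measurable (PiM {..<k} (\<lambda>_. (lborel::'a measure)))"
  by (intro borel_measurable_prod) (auto intro: measurable_compose[OF measurable_component_singleton])

lemma ham_nonneg: "(\<And>x. 0 \<le> \<phi> x) \<Longrightarrow> 0 \<le> ham \<phi> k x"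
  unfolding ham_def by (intro sum_nonneg) simp

lemma ham_translate: "ham \<phi> k (restrict (\<lambda>i. v + x i) {..<k}) = ham \<phi> k x"
  unfolding ham_def by (intro sum.cong refl) auto

lemma ham_fun_upd:
  assumes "\<And>x. \<phi> (- x) = \<phi> x"
  shows "ham \<phi> (Suc k) (x(k := v)) = ham \<phi> k x + (\<Sum>i<k. \<phi> (v - x i))"
proof -
  have "(\<Sum>i<k. \<phi> ((x(k := v)) i - v)) = (\<Sum>i<k. \<phi> (v - x i))"
    using assms by (intro sum.cong refl) (metis lessThan_iff less_irrefl fun_upd_other minus_diff_eq)
  moreover have "(\<Sum>j<k. \<Sum>i<j. \<phi> ((x(k := v)) i - (x(k := v)) j)) = ham \<phi> k x"
    unfolding ham_def by (intro sum.cong refl) auto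
  ultimately show ?thesis
    unfolding ham_def by simp
qed

definition gsum_term ::
    "('a::euclidean_space \<Rightarrow> real) \<Rightarrow> ('a \<Rightarrow> real) \<Rightarrow> (nat \<Rightarrow> (nat \<Rightarrow> 'a) \<Rightarrow> real) \<Rightarrow> nat \<Rightarrow> ennreal" where
  "gsum_term \<phi> f g n = (\<integral>\<^sup>+ x. ennreal ((\<Prod>i<Suc n. f (x i)) * exp (- ham \<phi> (Suc n) x) * g (Suc n) x)
      \<partial>(PiM {..<Suc n} (\<lambda>_. lborel)))"

lemma gsum_eq_terms:
  "gsum \<phi> f g = ennreal (g 0 (\<lambda>_. undefined)) + (\<Sum>n. ennreal (1 / fact (Suc n)) * gsum_term \<phi> f g n)"
  by (simp add: gsum_def gsum_term_def)

lemma gsum_mono: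
  assumes "g1 0 (\<lambda>_. undefined) \<le> g2 0 (\<lambda>_. undefined)"
    and "\<And>n. AE x in PiM {..<Suc n} (\<lambda>_. lborel). g1 (Suc n) x \<le> g2 (Suc n) x"
    and "\<And>x. 0 \<le> f x"
  shows "gsum \<phi> f g1 \<le> gsum \<phi> f g2"
  unfolding gsum_eq_terms
proof (intro add_mono suminf_le mult_left_mono)
  fix n
  have "0 \<le> (\<Prod>i<Suc n. f (x i)) * exp (- ham \<phi> (Suc n) x)" for x
    using assms(3) by (simp add: prod_nonneg)
  then show "gsum_term \<phi> f g1 n \<le> gsum_term \<phi> f g2 n"
    unfolding gsum_term_def
    by (intro nn_integral_mono_AE, use assms(2)[of n] in eventually_elim)
       (auto intro!: ennreal_leI mult_left_mono)
qed (use assms(1) in \<open>auto intro: ennreal_leI\<close>)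

lemma gsum_mono_activity:
  assumes "\<And>x. 0 \<le> f1 x" "\<And>x. f1 x \<le> f2 x" "\<And>k x. 0 \<le> g k x"
  shows "gsum \<phi> f1 g \<le> gsum \<phi> f2 g"
  unfolding gsum_eq_terms
proof (intro add_mono suminf_le mult_left_mono order.refl)
  fix n
  have "(\<Prod>i<Suc n. f1 (x i)) \<le> (\<Prod>i<Suc n. f2 (x i))" for x :: "nat \<Rightarrow> 'a"
    using assms(1,2) by (intro prod_mono) auto
  then show "gsum_term \<phi> f1 g n \<le> gsum_term \<phi> f2 g n"
    unfolding gsum_term_def using assms(3)
    by (intro nn_integral_mono ennreal_leI mult_right_mono) auto
qed auto

lemma gsum_add:
  fixes \<phi> f :: "'a::euclidean_space \<Rightarrow> real"
  assumes [measurable]: "\<phi> \<in> borel_measurable borel" "f \<in> borel_measurable borel"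
    "\<And>k. g1 k \<in> borel_measurable (PiM {..<k} (\<lambda>_. (lborel::'a measure)))"
    "\<And>k. g2 k \<in> borel_measurable (PiM {..<k} (\<lambda>_. (lborel::'a measure)))"
    and f0: "\<And>x. 0 \<le> f x" and g10: "\<And>k x. 0 \<le> g1 k x" and g20: "\<And>k x. 0 \<le> g2 k x"
  shows "gsum \<phi> f (\<lambda>k x. g1 k x + g2 k x) = gsum \<phi> f g1 + gsum \<phi> f g2"
proof -
  have "gsum_term \<phi> f (\<lambda>k x. g1 k x + g2 k x) n = gsum_term \<phi> f g1 n + gsum_term \<phi> f g2 n" for n
  proof -
    let ?w = "\<lambda>x. (\<Prod>i<Suc n. f (x i)) * exp (- ham \<phi> (Suc n) x)"
    have "gsum_term \<phi> f (\<lambda>k x. g1 k x + g2 k x) n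
        = (\<integral>\<^sup>+ x. ennreal (?w x * g1 (Suc n) x) + ennreal (?w x * g2 (Suc n) x) \<partial>(PiM {..<Suc n} (\<lambda>_. lborel)))"
      unfolding gsum_term_def
    proof (rule nn_integral_cong)
      fix x
      have "0 \<le> ?w x" using f0 by (simp add: prod_nonneg)
      then have "0 \<le> ?w x * g1 (Suc n) x" "0 \<le> ?w x * g2 (Suc n) x"
        using g10 g20 by simp_all
      then show "ennreal (?w x * (g1 (Suc n) x + g2 (Suc n) x))
          = ennreal (?w x * g1 (Suc n) x) + ennreal (?w x * g2 (Suc n) x)"
        by (simp only: distrib_left ennreal_plus)
    qed
    also have "\<dots> = gsum_term \<phi> f g1 n + gsum_term \<phi> f g2 n"
      unfolding gsum_term_def by (rule nn_integral_add) measurable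
    finally show ?thesis .
  qed
  then show ?thesis unfolding gsum_eq_terms
    using g10 g20 by (simp add: distrib_left suminf_add[symmetric] ennreal_plus add_ac)
qed

lemma gsum_cmult:
  fixes \<phi> f :: "'a::euclidean_space \<Rightarrow> real"
  assumes [measurable]: "\<phi> \<in> borel_measurable borel" "f \<in> borel_measurable borel"
    "\<And>k. g k \<in> borel_measurable (PiM {..<k} (\<lambda>_. (lborel::'a measure)))"
    and f0: "\<And>x. 0 \<le> f x" and g0: "\<And>k x. 0 \<le> g k x" and "0 \<le> c"
  shows "gsum \<phi> f (\<lambda>k x. c * g k x) = ennreal c * gsum \<phi> f g"
proof -
  have "gsum_term \<phi> f (\<lambda>k x. c * g k x) n = ennreal c * gsum_term \<phi> f g n" for n
  proof -
    let ?w = "\<lambda>x. (\<Prod>i<Suc n. f (x i)) * exp (- ham \<phi> (Suc n) x)"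
    have "gsum_term \<phi> f (\<lambda>k x. c * g k x) n
        = (\<integral>\<^sup>+ x. ennreal c * ennreal (?w x * g (Suc n) x) \<partial>(PiM {..<Suc n} (\<lambda>_. lborel)))"
      unfolding gsum_term_def
    proof (rule nn_integral_cong)
      fix x
      have "0 \<le> ?w x" using f0 by (simp add: prod_nonneg)
      then have "0 \<le> ?w x * g (Suc n) x" using g0 by simp
      then show "ennreal (?w x * (c * g (Suc n) x)) = ennreal c * ennreal (?w x * g (Suc n) x)"
        using \<open>0 \<le> c\<close> by (simp add: ennreal_mult[symmetric] ac_simps)
    qed
    also have "\<dots> = ennreal c * gsum_term \<phi> f g n"
      unfolding gsum_term_def by (rule nn_integral_cmult) measurable
    finally show ?thesis .
  qed
  then show ?thesis unfolding gsum_eq_terms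
    using g0 \<open>0 \<le> c\<close> by (simp add: distrib_left ennreal_mult ac_simps)
qed

lemma gsum_sum:
  fixes \<phi> f :: "'a::euclidean_space \<Rightarrow> real"
  assumes [measurable]: "\<phi> \<in> borel_measurable borel" "f \<in> borel_measurable borel"
    "\<And>j k. g j k \<in> borel_measurable (PiM {..<k} (\<lambda>_. (lborel::'a measure)))"
    and f0: "\<And>x. 0 \<le> f x" and g0: "\<And>j k x. 0 \<le> g j k x" and "finite J"
  shows "gsum \<phi> f (\<lambda>k x. \<Sum>j\<in>J. g j k x) = (\<Sum>j\<in>J. gsum \<phi> f (g j))"
  using \<open>finite J\<close>
proof (induction J rule: finite_induct)
  case empty
  then show ?case by (simp add: gsum_def)
next
  case (insert j J)
  then have "gsum \<phi> f (\<lambda>k x. \<Sum>j\<in>insert j J. g j k x) = gsum \<phi> f (\<lambda>k x. g j k x + (\<Sum>j\<in>J. g j k x))"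
    by simp
  also have "\<dots> = gsum \<phi> f (g j) + gsum \<phi> f (\<lambda>k x. \<Sum>j\<in>J. g j k x)"
    by (rule gsum_add) (auto intro!: sum_nonneg g0 f0)
  finally show ?case using insert by simp
qed

lemma gsum_translate:
  fixes \<phi> f :: "'a::euclidean_space \<Rightarrow> real" and v :: 'a
  assumes [measurable]: "\<phi> \<in> borel_measurable borel" "f \<in> borel_measurable borel"
    "\<And>k. g k \<in> borel_measurable (PiM {..<k} (\<lambda>_. (lborel::'a measure)))"
  shows "gsum \<phi> f g = gsum \<phi> (\<lambda>y. f (v + y)) (\<lambda>k x. g k (restrict (\<lambda>i. v + x i) {..<k}))"
proof -
  have "gsum_term \<phi> f g n = gsum_term \<phi> (\<lambda>y. f (v + y)) (\<lambda>k x. g k (restrict (\<lambda>i. v + x i) {..<k})) n" for n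
  proof -
    let ?T = "\<lambda>x. restrict (\<lambda>i. v + x i) {..<Suc n}"
    let ?F = "\<lambda>x. ennreal ((\<Prod>i<Suc n. f (x i)) * exp (- ham \<phi> (Suc n) x) * g (Suc n) x)"
    have "gsum_term \<phi> f g n = integral\<^sup>N (distr (PiM {..<Suc n} (\<lambda>_. lborel)) (PiM {..<Suc n} (\<lambda>_. lborel)) ?T) ?F"
      unfolding gsum_term_def distr_PiM_lborel_translate[OF finite_lessThan] ..
    also have "\<dots> = (\<integral>\<^sup>+ x. ?F (?T x) \<partial>(PiM {..<Suc n} (\<lambda>_. lborel)))"
      by (intro nn_integral_distr) measurable
    finally show ?thesis
      unfolding gsum_term_def ham_translate by simp
  qed
  then show ?thesis unfolding gsum_eq_terms by (simp add: restrict_def)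
qed

section \<open>The finite-volume partition function\<close>

definition config_integral :: "('a::euclidean_space \<Rightarrow> real) \<Rightarrow> 'a set \<Rightarrow> nat \<Rightarrow> real" where
  "config_integral \<phi> \<Lambda> m = enn2real (\<integral>\<^sup>+ x. indicator (PiE {..<m} (\<lambda>_. \<Lambda>)) x * ennreal (exp (- ham \<phi> m x))
      \<partial>(PiM {..<m} (\<lambda>_. lborel)))"

definition partition_coeff :: "('a::euclidean_space \<Rightarrow> real) \<Rightarrow> 'a set \<Rightarrow> nat \<Rightarrow> real" where
  "partition_coeff \<phi> \<Lambda> m = (if m = 0 then 1 else config_integral \<phi> \<Lambda> m / fact m)"

definition partition_series :: "('a::euclidean_space \<Rightarrow> real) \<Rightarrow> 'a set \<Rightarrow> real \<Rightarrow> real" where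
  "partition_series \<phi> \<Lambda> s = (\<Sum>m. partition_coeff \<phi> \<Lambda> m * s ^ m)"

definition partition_series_deriv :: "('a::euclidean_space \<Rightarrow> real) \<Rightarrow> 'a set \<Rightarrow> real \<Rightarrow> real" where
  "partition_series_deriv \<phi> \<Lambda> s = (\<Sum>m. diffs (partition_coeff \<phi> \<Lambda>) m * s ^ m)"

locale finite_volume =
  fixes \<phi> :: "'a::euclidean_space \<Rightarrow> real" and \<Lambda> :: "'a set"
  assumes phi_measurable [measurable]: "\<phi> \<in> borel_measurable borel"
    and phi_nonneg: "\<And>x. 0 \<le> \<phi> x"
    and sets_region [measurable]: "\<Lambda> \<in> sets borel"
    and bounded_region: "bounded \<Lambda>"
begin

abbreviation "vol \<equiv> measure lborel \<Lambda>"

lemma emeasure_region: "emeasure lborel \<Lambda> = ennreal vol"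
  using emeasure_bounded_finite[OF bounded_region]
  by (intro emeasure_eq_ennreal_measure) (simp add: top.not_eq_extremum)

lemma config_nn_integral_le:
  "(\<integral>\<^sup>+ x. indicator (PiE {..<m} (\<lambda>_. \<Lambda>)) x * ennreal (exp (- ham \<phi> m x)) \<partial>(PiM {..<m} (\<lambda>_. lborel)))
    \<le> ennreal (vol ^ m)"
proof -
  have "(\<integral>\<^sup>+ x. indicator (PiE {..<m} (\<lambda>_. \<Lambda>)) x * ennreal (exp (- ham \<phi> m x)) \<partial>(PiM {..<m} (\<lambda>_. lborel)))
     \<le> (\<integral>\<^sup>+ x. indicator (PiE {..<m} (\<lambda>_. \<Lambda>)) x \<partial>(PiM {..<m} (\<lambda>_. lborel)))"
  proof (rule nn_integral_mono)
    fix x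
    have "ennreal (exp (- ham \<phi> m x)) \<le> 1"
      using ham_nonneg[OF phi_nonneg] by (simp add: ennreal_leI[of _ 1, simplified])
    then show "indicator (PiE {..<m} (\<lambda>_. \<Lambda>)) x * ennreal (exp (- ham \<phi> m x))
        \<le> (indicator (PiE {..<m} (\<lambda>_. \<Lambda>)) x :: ennreal)"
      by (simp add: indicator_def)
  qed
  also have "\<dots> = emeasure lborel \<Lambda> ^ m"
    by (subst nn_integral_PiM_lborel_indicator_PiE) auto
  also have "\<dots> = ennreal (vol ^ m)"
    by (simp only: emeasure_region ennreal_power[OF measure_nonneg])
  finally show ?thesis .
qed

lemma config_nn_integral_eq:
  "(\<integral>\<^sup>+ x. indicator (PiE {..<m} (\<lambda>_. \<Lambda>)) x * ennreal (exp (- ham \<phi> m x)) \<partial>(PiM {..<m} (\<lambda>_. lborel)))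
    = ennreal (config_integral \<phi> \<Lambda> m)"
  using config_nn_integral_le[of m] unfolding config_integral_def
  by (subst ennreal_enn2real_if) (auto simp: top_unique)

lemma config_integral_nonneg: "0 \<le> config_integral \<phi> \<Lambda> m"
  unfolding config_integral_def by simp

lemma config_integral_le: "config_integral \<phi> \<Lambda> m \<le> vol ^ m"
  using config_nn_integral_le[of m] unfolding config_nn_integral_eq by (simp add: ennreal_le_iff)

lemma config_integral_one: "config_integral \<phi> \<Lambda> 1 = vol"
proof -
  have ham_one: "ham \<phi> 1 x = 0" for x by (simp add: ham_def)
  show ?thesis
    unfolding config_integral_def ham_one minus_zero exp_zero ennreal_1 mult_1_right
      nn_integral_PiM_lborel_indicator_PiE[OF finite_lessThan sets_region] card_lessThan
      power_one_right emeasure_region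
    by simp
qed

lemma partition_coeff_nonneg: "0 \<le> partition_coeff \<phi> \<Lambda> m"
  unfolding partition_coeff_def using config_integral_nonneg by simp

lemma summable_partition_coeff: "summable (\<lambda>m. partition_coeff \<phi> \<Lambda> m * y ^ m)"
proof (rule summable_comparison_test')
  show "summable (\<lambda>m. (vol * norm y) ^ m / fact m)"
    using summable_exp[of "vol * norm y"] by (simp add: divide_inverse_commute)
  fix m
  have "norm (partition_coeff \<phi> \<Lambda> m * y ^ m) = partition_coeff \<phi> \<Lambda> m * norm y ^ m"
    using partition_coeff_nonneg[of m] by (simp add: abs_mult power_abs)
  also have "\<dots> \<le> vol ^ m / fact m * norm y ^ m"
    using config_integral_le[of m]
    by (intro mult_right_mono) (simp_all add: partition_coeff_def divide_right_mono)
  finally show "norm (partition_coeff \<phi> \<Lambda> m * y ^ m) \<le> (vol * norm y) ^ m / fact m"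
    by (simp add: power_mult_distrib)
qed

lemma summable_partition_coeff_diffs: "summable (\<lambda>m. diffs (partition_coeff \<phi> \<Lambda>) m * y ^ m)"
  by (rule termdiff_converges_all) (rule summable_partition_coeff)

lemma partition_series_has_derivative:
  "(partition_series \<phi> \<Lambda> has_field_derivative partition_series_deriv \<phi> \<Lambda> s) (at s)"
  unfolding partition_series_def[abs_def] partition_series_deriv_def
  by (rule termdiffs_strong_converges_everywhere) (rule summable_partition_coeff)

lemma isCont_partition_series: "isCont (partition_series \<phi> \<Lambda>) s"
  using partition_series_has_derivative DERIV_isCont by blast

lemma isCont_partition_series_deriv: "isCont (partition_series_deriv \<phi> \<Lambda>) s"
proof -
  have "(partition_series_deriv \<phi> \<Lambda> has_field_derivative
      (\<Sum>m. diffs (diffs (partition_coeff \<phi> \<Lambda>)) m * s ^ m)) (at s)"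
    unfolding partition_series_deriv_def[abs_def]
    by (rule termdiffs_strong_converges_everywhere) (rule summable_partition_coeff_diffs)
  then show ?thesis by (rule DERIV_isCont)
qed

lemma partition_series_zero: "partition_series \<phi> \<Lambda> 0 = 1"
  unfolding partition_series_def by (simp add: partition_coeff_def)

lemma one_le_partition_series:
  assumes "0 \<le> s"
  shows "1 \<le> partition_series \<phi> \<Lambda> s"
proof -
  have "(\<Sum>m<1. partition_coeff \<phi> \<Lambda> m * s ^ m) \<le> partition_series \<phi> \<Lambda> s"
    unfolding partition_series_def using summable_partition_coeff
    by (rule sum_le_suminf) (use assms partition_coeff_nonneg in auto)
  then show ?thesis by (simp add: partition_coeff_def)
qed

lemma partition_series_deriv_nonneg: "0 \<le> s \<Longrightarrow> 0 \<le> partition_series_deriv \<phi> \<Lambda> s"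
  unfolding partition_series_deriv_def using partition_coeff_nonneg
  by (intro suminf_nonneg summable_partition_coeff_diffs) (simp add: diffs_def)

lemma nn_integral_indicator_activity:
  assumes "0 \<le> s"
  shows "(\<integral>\<^sup>+ y. ennreal ((\<Prod>i<m. s * indicator \<Lambda> (y i)) * exp (- ham \<phi> m y)) \<partial>(PiM {..<m} (\<lambda>_. lborel)))
     = ennreal (s ^ m * config_integral \<phi> \<Lambda> m)"
proof -
  have "(\<integral>\<^sup>+ y. ennreal ((\<Prod>i<m. s * indicator \<Lambda> (y i)) * exp (- ham \<phi> m y)) \<partial>(PiM {..<m} (\<lambda>_. lborel)))
     = (\<integral>\<^sup>+ y. ennreal (s ^ m) * (indicator (PiE {..<m} (\<lambda>_. \<Lambda>)) y * ennreal (exp (- ham \<phi> m y)))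
        \<partial>(PiM {..<m} (\<lambda>_. lborel)))"
  proof (rule nn_integral_cong)
    fix y assume "y \<in> space (PiM {..<m} (\<lambda>_. (lborel::'a measure)))"
    then have "(\<Prod>i<m. s * indicator \<Lambda> (y i)) = s ^ m * indicator (PiE {..<m} (\<lambda>_. \<Lambda>)) y"
      using prod_indicator_eq_indicator_PiE[of "{..<m}" y] by (simp add: prod.distrib)
    then show "ennreal ((\<Prod>i<m. s * indicator \<Lambda> (y i)) * exp (- ham \<phi> m y))
      = ennreal (s ^ m) * (indicator (PiE {..<m} (\<lambda>_. \<Lambda>)) y * ennreal (exp (- ham \<phi> m y)))"
      using assms by (simp add: ennreal_mult ennreal_indicator mult.assoc)
  qed
  also have "\<dots> = ennreal (s ^ m * config_integral \<phi> \<Lambda> m)"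
    using assms config_integral_nonneg
    by (simp add: nn_integral_cmult config_nn_integral_eq ennreal_mult)
  finally show ?thesis .
qed

lemma partition_series_eq_suminf:
  assumes "0 \<le> s"
  shows "ennreal (partition_series \<phi> \<Lambda> s) = 1 + (\<Sum>n. ennreal (partition_coeff \<phi> \<Lambda> (Suc n) * s ^ Suc n))"
proof -
  have "summable (\<lambda>n. partition_coeff \<phi> \<Lambda> (Suc n) * s ^ Suc n)"
    using summable_partition_coeff[of s] by (subst summable_Suc_iff)
  then have "(\<Sum>n. ennreal (partition_coeff \<phi> \<Lambda> (Suc n) * s ^ Suc n))
      = ennreal (\<Sum>n. partition_coeff \<phi> \<Lambda> (Suc n) * s ^ Suc n)"
    using assms partition_coeff_nonneg by (intro suminf_ennreal2) auto
  also have "(\<Sum>n. partition_coeff \<phi> \<Lambda> (Suc n) * s ^ Suc n) = partition_series \<phi> \<Lambda> s - 1"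
    unfolding partition_series_def using suminf_split_head[OF summable_partition_coeff[of s]]
    by (simp add: partition_coeff_def)
  finally have "(\<Sum>n. ennreal (partition_coeff \<phi> \<Lambda> (Suc n) * s ^ Suc n))
      = ennreal (partition_series \<phi> \<Lambda> s - 1)" .
  moreover have "ennreal (partition_series \<phi> \<Lambda> s) = ennreal 1 + ennreal (partition_series \<phi> \<Lambda> s - 1)"
    using one_le_partition_series[OF assms] by (subst ennreal_plus[symmetric]) auto
  ultimately show ?thesis by simp
qed

lemma Zact_indicator:
  assumes "0 \<le> s"
  shows "Zact \<phi> (\<lambda>x. s * indicator \<Lambda> x) = ennreal (partition_series \<phi> \<Lambda> s)"
proof -
  have "ennreal (1 / fact (Suc n)) * gsum_term \<phi> (\<lambda>x. s * indicator \<Lambda> x) (\<lambda>k x. 1) n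
      = ennreal (partition_coeff \<phi> \<Lambda> (Suc n) * s ^ Suc n)" for n
    unfolding gsum_term_def using nn_integral_indicator_activity[OF assms, of "Suc n"]
      assms config_integral_nonneg[of "Suc n"]
    by (simp add: ennreal_mult[symmetric] partition_coeff_def del: fact_Suc)
  then show ?thesis
    unfolding Zact_def gsum_eq_terms partition_series_eq_suminf[OF assms] by simp
qed

lemma Zbox_eq_partition_series:
  assumes "0 \<le> s"
  shows "Zbox \<phi> \<Lambda> s = ennreal (partition_series \<phi> \<Lambda> s)"
proof -
  have "ennreal (s ^ Suc n / fact (Suc n)) * ennreal (config_integral \<phi> \<Lambda> (Suc n))
      = ennreal (partition_coeff \<phi> \<Lambda> (Suc n) * s ^ Suc n)" for n
    using assms config_integral_nonneg[of "Suc n"]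
    by (simp add: ennreal_mult[symmetric] partition_coeff_def del: fact_Suc)
  then show ?thesis
    unfolding Zbox_def config_nn_integral_eq partition_series_eq_suminf[OF assms] by simp
qed

lemma continuous_on_log_deriv_partition_series:
  assumes "0 \<le> lam"
  shows "continuous_on {0..}
    (\<lambda>t. lam * partition_series_deriv \<phi> \<Lambda> (t * lam) / partition_series \<phi> \<Lambda> (t * lam))"
proof (rule continuous_at_imp_continuous_on, rule ballI)
  fix t :: real assume "t \<in> {0..}"
  then have "partition_series \<phi> \<Lambda> (t * lam) \<noteq> 0"
    using one_le_partition_series[of "t * lam"] assms by simp
  moreover have "isCont (\<lambda>t. partition_series \<phi> \<Lambda> (t * lam)) t"
    by (rule isCont_o2[OF _ isCont_partition_series]) (intro continuous_intros)
  moreover have "isCont (\<lambda>t. partition_series_deriv \<phi> \<Lambda> (t * lam)) t"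
    by (rule isCont_o2[OF _ isCont_partition_series_deriv]) (intro continuous_intros)
  ultimately show "isCont (\<lambda>t. lam * partition_series_deriv \<phi> \<Lambda> (t * lam) / partition_series \<phi> \<Lambda> (t * lam)) t"
    by (intro continuous_intros)
qed

lemma ln_partition_series_eq_integral:
  assumes "0 \<le> lam"
  shows "ln (partition_series \<phi> \<Lambda> lam)
    = (LBINT t:{0..1}. lam * partition_series_deriv \<phi> \<Lambda> (t * lam) / partition_series \<phi> \<Lambda> (t * lam))"
proof -
  let ?Z = "\<lambda>t. partition_series \<phi> \<Lambda> (t * lam)"
  let ?f = "\<lambda>t. lam * partition_series_deriv \<phi> \<Lambda> (t * lam) / ?Z t"
  have Z_pos: "0 < ?Z t" if "0 \<le> t" for t
    using one_le_partition_series[of "t * lam"] that assms by simp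
  have "continuous_on {0..1} ?f"
    using continuous_on_log_deriv_partition_series[OF assms] by (rule continuous_on_subset) auto
  moreover have "((\<lambda>t. ln (?Z t)) has_vector_derivative ?f t) (at t within {0..1})" if "0 \<le> t" for t
  proof -
    have "(?Z has_real_derivative partition_series_deriv \<phi> \<Lambda> (t * lam) * lam) (at t)"
      by (rule DERIV_chain2[OF partition_series_has_derivative]) (auto intro!: derivative_eq_intros)
    from DERIV_chain2[OF DERIV_ln_divide[OF Z_pos[OF that]] this]
    show ?thesis
      by (simp add: has_real_derivative_iff_has_vector_derivative[symmetric] has_field_derivative_at_within
          mult.commute)
  qed
  ultimately have "(LBINT t=ereal 0..ereal 1. ?f t) = ln (?Z 1) - ln (?Z 0)"
    by (intro interval_integral_FTC_finite) auto
  then show ?thesis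
    by (simp add: partition_series_zero interval_integral_Icc[of 0 1, simplified])
qed

end

section \<open>Gibbs expectations and the one-point density\<close>

lemma activity_le_indicator:
  assumes "0 \<le> s" "s \<le> lam" "\<Lambda> \<in> sets borel" "bounded \<Lambda>"
  shows "activity_le lam (\<lambda>x. s * indicator \<Lambda> x)"
proof -
  have "{x. s * indicator \<Lambda> x \<noteq> (0::real)} \<subseteq> \<Lambda>" by (auto simp: indicator_def)
  then have "bounded {x. s * indicator \<Lambda> x \<noteq> (0::real)}" using assms(4) bounded_subset by blast
  moreover have "(\<lambda>x. s * indicator \<Lambda> x) \<in> borel_measurable borel" using assms(3) by measurable
  ultimately show ?thesis using assms(1,2) unfolding activity_le_def by (auto simp: indicator_def)
qed

lemma activity_le_le_indicator_cball:
  fixes f :: "'a::euclidean_space \<Rightarrow> real"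
  assumes "activity_le lam f"
  obtains R where "\<And>x. f x \<le> lam * indicator (cball 0 R) x"
proof -
  from assms obtain R where R: "\<And>x. f x \<noteq> 0 \<Longrightarrow> norm x \<le> R"
    unfolding activity_le_def bounded_iff by auto
  have "f x \<le> lam * indicator (cball 0 R) x" for x
    using R[of x] assms by (cases "f x = 0") (auto simp: activity_le_def indicator_def)
  then show ?thesis by (rule that)
qed

definition gibbs_expect ::
    "('a::euclidean_space \<Rightarrow> real) \<Rightarrow> ('a \<Rightarrow> real) \<Rightarrow> (nat \<Rightarrow> (nat \<Rightarrow> 'a) \<Rightarrow> real) \<Rightarrow> real" where
  "gibbs_expect \<phi> f g = enn2real (gsum \<phi> f g) / enn2real (Zact \<phi> f)"

definition insertion_weight :: "('a::euclidean_space \<Rightarrow> real) \<Rightarrow> 'a \<Rightarrow> nat \<Rightarrow> (nat \<Rightarrow> 'a) \<Rightarrow> real" where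
  "insertion_weight \<phi> v k x = exp (- (\<Sum>i<k. \<phi> (v - x i)))"

lemma gibbs_prob_eq_gibbs_expect:
  "gibbs_prob \<phi> f \<Lambda> A = gibbs_expect \<phi> f (\<lambda>k x. indicator A (x ` {..<k} \<inter> \<Lambda>))"
  unfolding gibbs_prob_def gibbs_expect_def ..

lemma rho_fin_eq_gibbs_expect: "rho_fin \<phi> f v = f v * gibbs_expect \<phi> f (insertion_weight \<phi> v)"
  unfolding rho_fin_def gibbs_expect_def insertion_weight_def[abs_def] ..

lemma borel_measurable_insertion_weight [measurable]:
  assumes [measurable]: "\<phi> \<in> borel_measurable borel"
  shows "insertion_weight \<phi> v k \<in> borel_measurable (PiM {..<k} (\<lambda>_. (lborel::'a::euclidean_space measure)))"
  unfolding insertion_weight_def[abs_def] by measurable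

lemma insertion_weight_bounds:
  "(\<And>x. 0 \<le> \<phi> x) \<Longrightarrow> 0 \<le> insertion_weight \<phi> v k x \<and> insertion_weight \<phi> v k x \<le> 1"
  unfolding insertion_weight_def by (auto intro!: sum_nonneg)

lemma insertion_weight_0 [simp]: "insertion_weight \<phi> v 0 x = 1"
  unfolding insertion_weight_def by simp

lemma insertion_weight_translate:
  "insertion_weight \<phi> v k (restrict (\<lambda>i. v + x i) {..<k}) = insertion_weight \<phi> 0 k x"
  unfolding insertion_weight_def by simp

locale bounded_activity =
  fixes \<phi> :: "'a::euclidean_space \<Rightarrow> real" and f :: "'a \<Rightarrow> real" and lam :: real
  assumes phi_measurable [measurable]: "\<phi> \<in> borel_measurable borel"
    and phi_nonneg: "\<And>x. 0 \<le> \<phi> x"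
    and activity_le: "activity_le lam f"
begin

lemma activity_measurable [measurable]: "f \<in> borel_measurable borel"
  and activity_nonneg: "0 \<le> f x"
  using activity_le by (auto simp: activity_le_def)

lemma Zact_less_top: "Zact \<phi> f < top"
proof -
  obtain R where R: "\<And>x. f x \<le> lam * indicator (cball 0 R) x"
    using activity_le_le_indicator_cball[OF activity_le] by blast
  interpret finite_volume \<phi> "cball 0 R"
    by unfold_locales (auto intro: phi_nonneg)
  have "0 \<le> lam" using activity_le by (auto simp: activity_le_def intro: order_trans)
  have "Zact \<phi> f \<le> Zact \<phi> (\<lambda>x. lam * indicator (cball 0 R) x)"
    unfolding Zact_def using R by (intro gsum_mono_activity activity_nonneg) auto
  also have "\<dots> = ennreal (partition_series \<phi> (cball 0 R) lam)"
    by (rule Zact_indicator) fact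
  also have "\<dots> < top" by simp
  finally show ?thesis .
qed

lemma enn2real_Zact_ge_one: "1 \<le> enn2real (Zact \<phi> f)"
proof -
  have "1 \<le> Zact \<phi> f"
    unfolding Zact_def gsum_eq_terms by (rule add_increasing2) auto
  then show ?thesis using Zact_less_top by (metis enn2real_1 enn2real_mono)
qed

lemma gsum_less_top:
  assumes "\<And>k x. g k x \<le> c" "0 \<le> c"
  shows "gsum \<phi> f g < top"
proof -
  have "gsum \<phi> f g \<le> gsum \<phi> f (\<lambda>k x. c * 1)"
    using assms by (intro gsum_mono activity_nonneg) auto
  also have "\<dots> = ennreal c * Zact \<phi> f"
    unfolding Zact_def using \<open>0 \<le> c\<close> by (intro gsum_cmult activity_nonneg) auto
  also have "\<dots> < top"
    using Zact_less_top by (simp add: ennreal_mult_less_top)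
  finally show ?thesis .
qed

lemma gibbs_expect_mono:
  assumes "g1 0 (\<lambda>_. undefined) \<le> g2 0 (\<lambda>_. undefined)"
    and "\<And>n. AE x in PiM {..<Suc n} (\<lambda>_. lborel). g1 (Suc n) x \<le> g2 (Suc n) x"
    and "\<And>k x. g2 k x \<le> c" "0 \<le> c"
  shows "gibbs_expect \<phi> f g1 \<le> gibbs_expect \<phi> f g2"
proof -
  have "gsum \<phi> f g1 \<le> gsum \<phi> f g2"
    by (rule gsum_mono) (use assms activity_nonneg in auto)
  moreover have "gsum \<phi> f g2 < top"
    by (rule gsum_less_top) (use assms in auto)
  ultimately show ?thesis
    unfolding gibbs_expect_def using enn2real_Zact_ge_one by (intro divide_right_mono enn2real_mono) auto
qed

lemma gibbs_expect_add:
  assumes [measurable]: "\<And>k. g k \<in> borel_measurable (PiM {..<k} (\<lambda>_. lborel))"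
      "\<And>k. h k \<in> borel_measurable (PiM {..<k} (\<lambda>_. lborel))"
    and "\<And>k x. 0 \<le> g k x \<and> g k x \<le> c" "\<And>k x. 0 \<le> h k x \<and> h k x \<le> d"
  shows "gibbs_expect \<phi> f (\<lambda>k x. g k x + h k x) = gibbs_expect \<phi> f g + gibbs_expect \<phi> f h"
proof -
  have "0 \<le> c" "0 \<le> d" using assms(3,4) order_trans by blast+
  then have "gsum \<phi> f g < top" "gsum \<phi> f h < top"
    using assms(3,4) by (metis gsum_less_top)+
  moreover have "gsum \<phi> f (\<lambda>k x. g k x + h k x) = gsum \<phi> f g + gsum \<phi> f h"
    using assms(3,4) by (intro gsum_add activity_nonneg) auto
  ultimately show ?thesis
    unfolding gibbs_expect_def by (simp add: enn2real_plus add_divide_distrib)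
qed

lemma gibbs_expect_cmult:
  assumes [measurable]: "\<And>k. g k \<in> borel_measurable (PiM {..<k} (\<lambda>_. lborel))"
    and "\<And>k x. 0 \<le> g k x" "0 \<le> c"
  shows "gibbs_expect \<phi> f (\<lambda>k x. c * g k x) = c * gibbs_expect \<phi> f g"
  unfolding gibbs_expect_def gsum_cmult[OF phi_measurable activity_measurable assms(1) activity_nonneg assms(2,3)]
  using \<open>0 \<le> c\<close> by (simp add: enn2real_mult)

lemma gibbs_expect_sum:
  assumes [measurable]: "\<And>j k. g j k \<in> borel_measurable (PiM {..<k} (\<lambda>_. lborel))"
    and "\<And>j k x. 0 \<le> g j k x \<and> g j k x \<le> c" "finite J"
  shows "gibbs_expect \<phi> f (\<lambda>k x. \<Sum>j\<in>J. g j k x) = (\<Sum>j\<in>J. gibbs_expect \<phi> f (g j))"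
proof -
  have "0 \<le> c" using assms(2) order_trans by blast
  then have "gsum \<phi> f (g j) < top" for j
    using assms(2) by (metis gsum_less_top)
  moreover have "gsum \<phi> f (\<lambda>k x. \<Sum>j\<in>J. g j k x) = (\<Sum>j\<in>J. gsum \<phi> f (g j))"
    using assms(2,3) by (intro gsum_sum activity_nonneg) auto
  ultimately show ?thesis
    unfolding gibbs_expect_def by (simp add: enn2real_sum sum_divide_distrib)
qed

lemma gibbs_expect_const:
  assumes "0 \<le> c"
  shows "gibbs_expect \<phi> f (\<lambda>k x. c) = c"
proof -
  have "gsum \<phi> f (\<lambda>k x. c * 1) = ennreal c * Zact \<phi> f"
    unfolding Zact_def using assms by (intro gsum_cmult activity_nonneg) auto
  then show ?thesis
    using assms enn2real_Zact_ge_one unfolding gibbs_expect_def by (simp add: enn2real_mult)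
qed

lemma rho_fin_bounds: "0 \<le> rho_fin \<phi> f v" "rho_fin \<phi> f v \<le> f v"
proof -
  have "0 \<le> gibbs_expect \<phi> f (insertion_weight \<phi> v)"
    unfolding gibbs_expect_def by simp
  moreover have "gibbs_expect \<phi> f (insertion_weight \<phi> v) \<le> gibbs_expect \<phi> f (\<lambda>k x. 1)"
    using insertion_weight_bounds[of \<phi>, OF phi_nonneg] by (intro gibbs_expect_mono[of _ _ 1] AE_I2) auto
  ultimately show "0 \<le> rho_fin \<phi> f v" "rho_fin \<phi> f v \<le> f v"
    unfolding rho_fin_eq_gibbs_expect gibbs_expect_const[OF zero_le_one]
    using activity_nonneg[of v] by (auto intro: mult_left_le)
qed

end

context finite_volume
begin

lemma partition_series_deriv_eq_suminf:
  assumes "0 \<le> s"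
  shows "ennreal (s * partition_series_deriv \<phi> \<Lambda> s) = ennreal (s * vol)
    + (\<Sum>n. ennreal (1 / fact (Suc n)) * ennreal (s ^ Suc (Suc n) * config_integral \<phi> \<Lambda> (Suc (Suc n))))"
proof -
  define t where "t m = s * (diffs (partition_coeff \<phi> \<Lambda>) m * s ^ m)" for m
  have t_summable: "summable t"
    unfolding t_def by (intro summable_mult summable_partition_coeff_diffs)
  have t_nonneg: "0 \<le> t m" for m
    unfolding t_def using assms partition_coeff_nonneg by (simp add: diffs_def)
  have t_0: "t 0 = s * vol"
    unfolding t_def diffs_def partition_coeff_def using config_integral_one by simp
  have t_Suc: "ennreal (t (Suc n))
      = ennreal (1 / fact (Suc n)) * ennreal (s ^ Suc (Suc n) * config_integral \<phi> \<Lambda> (Suc (Suc n)))" for n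
  proof -
    have "real (Suc (Suc n)) / fact (Suc (Suc n)) = 1 / (fact (Suc n) :: real)"
      by (simp add: divide_simps del: fact_Suc) (simp add: algebra_simps)
    moreover have "t (Suc n) = real (Suc (Suc n)) / fact (Suc (Suc n))
        * (s ^ Suc (Suc n) * config_integral \<phi> \<Lambda> (Suc (Suc n)))"
      unfolding t_def diffs_def partition_coeff_def by (simp add: field_simps del: fact_Suc)
    ultimately have "t (Suc n) = 1 / fact (Suc n) * (s ^ Suc (Suc n) * config_integral \<phi> \<Lambda> (Suc (Suc n)))"
      by simp
    then show ?thesis
      using assms config_integral_nonneg by (simp add: ennreal_mult[symmetric])
  qed
  have "s * partition_series_deriv \<phi> \<Lambda> s = suminf t"
    unfolding t_def partition_series_deriv_def by (subst suminf_mult) (auto intro: summable_partition_coeff_diffs)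
  also have "\<dots> = t 0 + (\<Sum>n. t (Suc n))"
    using suminf_split_head[OF t_summable] by simp
  also have "ennreal \<dots> = ennreal (t 0) + (\<Sum>n. ennreal (t (Suc n)))"
    using t_nonneg t_summable
    by (subst ennreal_plus) (auto intro!: suminf_nonneg suminf_ennreal2[symmetric] simp: summable_Suc_iff)
  finally show ?thesis unfolding t_Suc t_0 .
qed

lemma borel_measurable_gsum_term_insertion_weight:
  "(\<lambda>v. gsum_term \<phi> (\<lambda>x. s * indicator \<Lambda> x) (insertion_weight \<phi> v) n) \<in> borel_measurable borel"
proof -
  interpret sigma_finite_measure "PiM {..<Suc n} (\<lambda>_::nat. (lborel::'a measure))"
    by (rule product_sigma_finite.sigma_finite[OF product_sigma_finite_lborel]) simp
  show ?thesis
    unfolding gsum_term_def insertion_weight_def by (rule borel_measurable_nn_integral) measurable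
qed

lemma borel_measurable_gsum_insertion_weight [measurable]:
  "(\<lambda>v. gsum \<phi> (\<lambda>x. s * indicator \<Lambda> x) (insertion_weight \<phi> v)) \<in> borel_measurable borel"
  unfolding gsum_eq_terms insertion_weight_0
  using borel_measurable_gsum_term_insertion_weight by measurable

text \<open>Inserting a point \<open>v\<close> into a configuration of \<open>n + 1\<close> points multiplies its Boltzmann
  weight by the insertion weight at \<open>v\<close>; integrating over \<open>v\<close> gives the \<open>n + 2\<close>-point integral.\<close>

lemma nn_integral_gsum_term_insertion_weight:
  assumes "\<And>x. \<phi> (- x) = \<phi> x" and "0 \<le> s"
  shows "(\<integral>\<^sup>+ v. ennreal (s * indicator \<Lambda> v) * gsum_term \<phi> (\<lambda>x. s * indicator \<Lambda> x) (insertion_weight \<phi> v) n \<partial>lborel)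
    = ennreal (s ^ Suc (Suc n) * config_integral \<phi> \<Lambda> (Suc (Suc n)))"
proof -
  let ?w = "\<lambda>m y. (\<Prod>i<m. s * indicator \<Lambda> (y i)) * exp (- ham \<phi> m y)"
  have insert_point: "ennreal (s * indicator \<Lambda> v) * ennreal (?w (Suc n) x * insertion_weight \<phi> v (Suc n) x)
      = ennreal (?w (Suc (Suc n)) (x(Suc n := v)))" for v x
  proof -
    have prod_upd: "(\<Prod>i<Suc (Suc n). s * indicator \<Lambda> ((x(Suc n := v)) i))
        = (\<Prod>i<Suc n. s * indicator \<Lambda> (x i)) * (s * indicator \<Lambda> v)"
      by (simp add: prod.lessThan_Suc[of _ "Suc n"])
    have exp_upd: "exp (- ham \<phi> (Suc (Suc n)) (x(Suc n := v)))
        = exp (- ham \<phi> (Suc n) x) * insertion_weight \<phi> v (Suc n) x"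
      unfolding ham_fun_upd[of \<phi>, OF assms(1)] insertion_weight_def by (simp add: exp_add[symmetric])
    have "0 \<le> ?w (Suc n) x"
      using assms(2) by (auto intro!: mult_nonneg_nonneg prod_nonneg)
    then have nonneg: "0 \<le> s * indicator \<Lambda> v" "0 \<le> ?w (Suc n) x * insertion_weight \<phi> v (Suc n) x"
      using assms(2) insertion_weight_bounds[of \<phi>, OF phi_nonneg] by auto
    show ?thesis
      unfolding prod_upd exp_upd ennreal_mult[OF nonneg, symmetric] by (simp add: ac_simps)
  qed
  have "(\<integral>\<^sup>+ v. ennreal (s * indicator \<Lambda> v) * gsum_term \<phi> (\<lambda>x. s * indicator \<Lambda> x) (insertion_weight \<phi> v) n \<partial>lborel)
      = (\<integral>\<^sup>+ v. (\<integral>\<^sup>+ x. ennreal (?w (Suc (Suc n)) (x(Suc n := v))) \<partial>(PiM {..<Suc n} (\<lambda>_. lborel))) \<partial>lborel)"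
    unfolding gsum_term_def insert_point[symmetric]
    by (intro nn_integral_cong nn_integral_cmult[symmetric]) measurable
  also have "\<dots> = (\<integral>\<^sup>+ y. ennreal (?w (Suc (Suc n)) y) \<partial>(PiM (insert (Suc n) {..<Suc n}) (\<lambda>_. lborel)))"
    by (rule product_sigma_finite.product_nn_integral_insert_rev[OF product_sigma_finite_lborel, symmetric])
      (auto simp: lessThan_Suc[symmetric])
  also have "\<dots> = ennreal (s ^ Suc (Suc n) * config_integral \<phi> \<Lambda> (Suc (Suc n)))"
    unfolding lessThan_Suc[symmetric] by (rule nn_integral_indicator_activity[OF assms(2)])
  finally show ?thesis .
qed

lemma nn_integral_gsum_insertion_weight:
  assumes "\<And>x. \<phi> (- x) = \<phi> x" and "0 \<le> s"
  shows "(\<integral>\<^sup>+ v. ennreal (s * indicator \<Lambda> v) * gsum \<phi> (\<lambda>x. s * indicator \<Lambda> x) (insertion_weight \<phi> v) \<partial>lborel)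
    = ennreal (s * partition_series_deriv \<phi> \<Lambda> s)"
proof -
  let ?f = "\<lambda>x. s * indicator \<Lambda> x"
  let ?T = "\<lambda>n v. gsum_term \<phi> ?f (insertion_weight \<phi> v) n"
  have [measurable]: "(\<lambda>v. ?T n v) \<in> borel_measurable borel" for n
    by (rule borel_measurable_gsum_term_insertion_weight)
  have "(\<integral>\<^sup>+ v. ennreal (s * indicator \<Lambda> v) * gsum \<phi> ?f (insertion_weight \<phi> v) \<partial>lborel)
     = (\<integral>\<^sup>+ v. ennreal (s * indicator \<Lambda> v)
          + (\<Sum>n. ennreal (1 / fact (Suc n)) * (ennreal (s * indicator \<Lambda> v) * ?T n v)) \<partial>lborel)"
    unfolding gsum_eq_terms insertion_weight_0 ennreal_1 distrib_left mult_1_right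
      ennreal_suminf_cmult[symmetric]
    by (simp only: ac_simps)
  also have "\<dots> = (\<integral>\<^sup>+ v. ennreal (s * indicator \<Lambda> v) \<partial>lborel)
      + (\<Sum>n. ennreal (1 / fact (Suc n)) * (\<integral>\<^sup>+ v. ennreal (s * indicator \<Lambda> v) * ?T n v \<partial>lborel))"
    by (subst nn_integral_add) (auto simp: nn_integral_suminf nn_integral_cmult)
  also have "(\<integral>\<^sup>+ v. ennreal (s * indicator \<Lambda> v) \<partial>lborel) = ennreal (s * vol)"
    using assms(2) by (simp add: ennreal_mult ennreal_indicator nn_integral_cmult emeasure_region)
  finally show ?thesis
    unfolding nn_integral_gsum_term_insertion_weight[OF assms] partition_series_deriv_eq_suminf[OF assms(2)] .
qed

lemma borel_measurable_rho_fin_indicator [measurable]: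
  "(\<lambda>v. rho_fin \<phi> (\<lambda>x. s * indicator \<Lambda> x) v) \<in> borel_measurable borel"
  unfolding rho_fin_eq_gibbs_expect gibbs_expect_def by measurable

lemma set_integral_rho_fin_indicator:
  assumes "\<And>x. \<phi> (- x) = \<phi> x" and "0 \<le> s"
  shows "(LBINT v:\<Lambda>. rho_fin \<phi> (\<lambda>x. s * indicator \<Lambda> x) v)
    = s * partition_series_deriv \<phi> \<Lambda> s / partition_series \<phi> \<Lambda> s"
proof -
  let ?f = "\<lambda>x. s * indicator \<Lambda> x"
  let ?W = "\<lambda>v. gsum \<phi> ?f (insertion_weight \<phi> v)"
  define Z where "Z = partition_series \<phi> \<Lambda> s"
  interpret bounded_activity \<phi> ?f s
    using assms(2) by unfold_locales (auto intro: phi_nonneg activity_le_indicator bounded_region)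
  have "1 \<le> Z" unfolding Z_def by (rule one_le_partition_series[OF assms(2)])
  have W_finite: "ennreal (enn2real (?W v)) = ?W v" for v
    using gsum_less_top[of "insertion_weight \<phi> v" 1] insertion_weight_bounds[of \<phi>, OF phi_nonneg]
    by (simp add: less_top)
  have "ennreal (indicator \<Lambda> v * rho_fin \<phi> ?f v) = ennreal (1 / Z) * (ennreal (s * indicator \<Lambda> v) * ?W v)" for v
  proof -
    have "indicator \<Lambda> v * rho_fin \<phi> ?f v = 1 / Z * (s * indicator \<Lambda> v * enn2real (?W v))"
      unfolding rho_fin_eq_gibbs_expect gibbs_expect_def Zact_indicator[OF assms(2)] Z_def[symmetric]
      using \<open>1 \<le> Z\<close> by (simp add: indicator_def)
    moreover have "0 \<le> 1 / Z" "0 \<le> s * indicator \<Lambda> v" "0 \<le> enn2real (?W v)"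
      using \<open>1 \<le> Z\<close> assms(2) by auto
    ultimately show ?thesis
      by (simp only: ennreal_mult mult_nonneg_nonneg W_finite)
  qed
  then have "(\<integral>\<^sup>+ v. ennreal (indicator \<Lambda> v * rho_fin \<phi> ?f v) \<partial>lborel)
      = ennreal (1 / Z) * ennreal (s * partition_series_deriv \<phi> \<Lambda> s)"
    by (simp add: nn_integral_cmult nn_integral_gsum_insertion_weight[OF assms])
  also have "\<dots> = ennreal (s * partition_series_deriv \<phi> \<Lambda> s / Z)"
    using \<open>1 \<le> Z\<close> partition_series_deriv_nonneg[OF assms(2)] assms(2)
    by (subst ennreal_mult[symmetric]) auto
  finally have "(\<integral>\<^sup>+ v. ennreal (indicator \<Lambda> v * rho_fin \<phi> ?f v) \<partial>lborel)
      = ennreal (s * partition_series_deriv \<phi> \<Lambda> s / Z)" .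
  moreover have "(LBINT v:\<Lambda>. rho_fin \<phi> ?f v)
      = enn2real (\<integral>\<^sup>+ v. ennreal (indicator \<Lambda> v * rho_fin \<phi> ?f v) \<partial>lborel)"
    unfolding set_lebesgue_integral_def using rho_fin_bounds(1)
    by (simp add: integral_eq_nn_integral)
  ultimately show ?thesis
    unfolding Z_def using assms(2) \<open>1 \<le> Z\<close> partition_series_deriv_nonneg[OF assms(2)] Z_def by simp
qed

lemma rho_fin_indicator_bounds:
  assumes "0 \<le> s"
  shows "0 \<le> rho_fin \<phi> (\<lambda>x. s * indicator \<Lambda> x) v" "rho_fin \<phi> (\<lambda>x. s * indicator \<Lambda> x) v \<le> s * indicator \<Lambda> v"
proof -
  interpret bounded_activity \<phi> "\<lambda>x. s * indicator \<Lambda> x" s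
    using assms by unfold_locales (auto intro: phi_nonneg activity_le_indicator bounded_region)
  show "0 \<le> rho_fin \<phi> (\<lambda>x. s * indicator \<Lambda> x) v" "rho_fin \<phi> (\<lambda>x. s * indicator \<Lambda> x) v \<le> s * indicator \<Lambda> v"
    using rho_fin_bounds by auto
qed

lemma integrable_indicator_region: "integrable lborel (indicator \<Lambda> :: 'a \<Rightarrow> real)"
  using emeasure_region by (simp add: integrable_real_indicator)

lemma integrable_rho_fin_indicator:
  assumes "0 \<le> s"
  shows "integrable lborel (\<lambda>v. indicator \<Lambda> v * rho_fin \<phi> (\<lambda>x. s * indicator \<Lambda> x) v)"
proof (rule Bochner_Integration.integrable_bound[OF integrable_mult_right[OF integrable_indicator_region, of s]])
  show "AE v in lborel. norm (indicator \<Lambda> v * rho_fin \<phi> (\<lambda>x. s * indicator \<Lambda> x) v) \<le> norm (s * indicator \<Lambda> v)"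
  proof (rule AE_I2)
    fix v
    show "norm (indicator \<Lambda> v * rho_fin \<phi> (\<lambda>x. s * indicator \<Lambda> x) v) \<le> norm (s * indicator \<Lambda> v)"
      using rho_fin_indicator_bounds[OF assms, of v] assms by (cases "v \<in> \<Lambda>") auto
  qed
qed measurable

lemma set_integral_rho_fin_indicator_bounds:
  assumes "0 \<le> s"
  shows "0 \<le> (LBINT v:\<Lambda>. rho_fin \<phi> (\<lambda>x. s * indicator \<Lambda> x) v)"
    "(LBINT v:\<Lambda>. rho_fin \<phi> (\<lambda>x. s * indicator \<Lambda> x) v) \<le> s * vol"
proof -
  show "0 \<le> (LBINT v:\<Lambda>. rho_fin \<phi> (\<lambda>x. s * indicator \<Lambda> x) v)"
    unfolding set_lebesgue_integral_def using rho_fin_indicator_bounds(1)[OF assms]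
    by (intro integral_nonneg_AE AE_I2) simp
  have "(LBINT v:\<Lambda>. rho_fin \<phi> (\<lambda>x. s * indicator \<Lambda> x) v) \<le> integral\<^sup>L lborel (\<lambda>v. s * indicator \<Lambda> v)"
    unfolding set_lebesgue_integral_def
  proof (rule integral_mono)
    show "integrable lborel (\<lambda>v. indicator \<Lambda> v *\<^sub>R rho_fin \<phi> (\<lambda>x. s * indicator \<Lambda> x) v)"
      using integrable_rho_fin_indicator[OF assms] by simp
    show "integrable lborel (\<lambda>v. s * indicator \<Lambda> v)"
      by (intro integrable_mult_right integrable_indicator_region)
    fix v
    show "indicator \<Lambda> v *\<^sub>R rho_fin \<phi> (\<lambda>x. s * indicator \<Lambda> x) v \<le> s * indicator \<Lambda> v"
      using rho_fin_indicator_bounds[OF assms, of v] by (cases "v \<in> \<Lambda>") auto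
  qed
  then show "(LBINT v:\<Lambda>. rho_fin \<phi> (\<lambda>x. s * indicator \<Lambda> x) v) \<le> s * vol"
    using integrable_indicator_region by simp
qed

end

section \<open>Strong spatial mixing and the one-point density\<close>

lemma sum_image_lessThan:
  fixes x :: "nat \<Rightarrow> 'a"
  shows "(\<Sum>y\<in>x ` {..<k}. h y) = (\<Sum>i<k. if \<exists>i'\<in>{..<i}. x i' = x i then 0 else h (x i))"
proof (induction k)
  case (Suc k)
  show ?case
  proof (cases "\<exists>i'\<in>{..<k}. x i' = x k")
    case True
    then have "x k \<in> x ` {..<k}" by (metis image_eqI lessThan_iff)
    then have "x ` {..<Suc k} = x ` {..<k}" by (auto simp: lessThan_Suc)
    then show ?thesis using Suc True by simp
  next
    case False
    then have "x k \<notin> x ` {..<k}" by force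
    moreover have "(if \<exists>i'\<in>{..<k}. x i' = x k then 0 else h (x k)) = h (x k)"
      by (rule if_not_P[OF False])
    ultimately show ?thesis using Suc by (simp only: lessThan_Suc sum.insert finite_imageI finite_lessThan image_insert) (simp add: add.commute)
  qed
qed simp

lemma staircase_count_bounds:
  fixes y :: real
  assumes "0 \<le> y" "y \<le> real N"
  shows "y - 1 \<le> (\<Sum>j\<in>{1..N}. if real j < y then 1 else 0)
    \<and> (\<Sum>j\<in>{1..N}. if real j < y then 1 else 0) \<le> y"
  using assms
proof (induction N)
  case (Suc N)
  have split: "(\<Sum>j\<in>{1..Suc N}. if real j < y then 1 else 0 :: real)
     = (\<Sum>j\<in>{1..N}. if real j < y then 1 else 0) + (if real (Suc N) < y then 1 else 0)"
    by (simp add: sum.cl_ivl_Suc)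
  show ?case
  proof (cases "y \<le> real N")
    case True
    then show ?thesis using Suc split by auto
  next
    case False
    then have "(\<Sum>j\<in>{1..N}. if real j < y then 1 else 0 :: real) = real N"
      by (simp add: sum.cong[of _ _ _ "\<lambda>_. 1"])
    then show ?thesis using False Suc.prems split by auto
  qed
qed simp

lemma staircase_bounds:
  fixes F :: real and N :: nat
  assumes "0 \<le> F" "F \<le> 1" "0 < N"
  defines "S \<equiv> (1 / real N) * (\<Sum>j\<in>{1..N}. if real j / real N < F then 1 else 0)"
  shows "S \<le> F" "F \<le> S + 1 / real N"
proof -
  define c where "c = (\<Sum>j\<in>{1..N}. if real j < real N * F then 1 else 0 :: real)"
  have "S = c / real N"
    unfolding S_def c_def using assms(3) by (simp add: divide_less_eq mult.commute)
  moreover have "real N * F - 1 \<le> c" "c \<le> real N * F"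
    using staircase_count_bounds[of "real N * F" N] assms unfolding c_def by (auto simp: mult_left_le)
  ultimately show "S \<le> F" "F \<le> S + 1 / real N"
    using assms(3) by (simp_all add: divide_le_eq le_divide_eq add_divide_distrib[symmetric] mult.commute)
qed

definition interaction_energy :: "('a::euclidean_space \<Rightarrow> real) \<Rightarrow> 'a \<Rightarrow> 'a set \<Rightarrow> real" where
  "interaction_energy \<phi> v S = (\<Sum>y\<in>S. \<phi> (v - y))"

definition level_event :: "('a::euclidean_space \<Rightarrow> real) \<Rightarrow> 'a \<Rightarrow> real \<Rightarrow> 'a set set" where
  "level_event \<phi> v t = {S. t < exp (- interaction_energy \<phi> v S)}"

lemma borel_measurable_interaction_energy [measurable]:
  fixes k :: nat
  assumes [measurable]: "\<phi> \<in> borel_measurable borel"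
  shows "(\<lambda>x. interaction_energy \<phi> v (x ` {..<k})) \<in> borel_measurable (PiM {..<k} (\<lambda>_. (lborel::'a::euclidean_space measure)))"
proof -
  have [measurable]: "Measurable.pred (PiM {..<k} (\<lambda>_. (lborel::'a measure))) (\<lambda>x. \<exists>i'\<in>{..<i}. x i' = x i)"
    if "i \<in> {..<k}" for i
    using that by (intro pred_intros_finite(4)) (auto intro!: pred_PiM_lborel_components_eq)
  have "(\<lambda>x. \<Sum>i<k. if \<exists>i'\<in>{..<i}. x i' = x i then 0 else \<phi> (v - x i))
      \<in> borel_measurable (PiM {..<k} (\<lambda>_. (lborel::'a measure)))"
    by measurable
  then show ?thesis
    unfolding interaction_energy_def sum_image_lessThan .
qed

lemma config_event_level_event:
  assumes [measurable]: "\<phi> \<in> borel_measurable borel"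
  shows "config_event (level_event \<phi> v t)"
  unfolding config_event_def level_event_def by measurable

lemma interaction_energy_inj_on:
  fixes x :: "nat \<Rightarrow> 'a::euclidean_space"
  shows "inj_on x {..<k} \<Longrightarrow> interaction_energy \<phi> v (x ` {..<k}) = (\<Sum>i<k. \<phi> (v - x i))"
  unfolding interaction_energy_def by (simp add: sum.reindex)

locale finite_range_potential =
  fixes \<phi> :: "'a::euclidean_space \<Rightarrow> real" and r :: real
  assumes phi_measurable [measurable]: "\<phi> \<in> borel_measurable borel"
    and phi_nonneg: "\<And>x. 0 \<le> \<phi> x"
    and phi_finite_range: "\<And>x. r < norm x \<Longrightarrow> \<phi> x = 0"
begin

lemma interaction_energy_inter_cball:
  assumes "finite S"
  shows "interaction_energy \<phi> v (S \<inter> cball v r) = interaction_energy \<phi> v S"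
  unfolding interaction_energy_def
proof (rule sum.mono_neutral_left)
  show "\<forall>y\<in>S - S \<inter> cball v r. \<phi> (v - y) = 0"
    by (auto intro!: phi_finite_range simp: dist_norm)
qed (use assms in auto)

lemma indicator_level_event_inter_cball:
  fixes x :: "nat \<Rightarrow> 'a"
  shows "indicator (level_event \<phi> v t) (x ` {..<k} \<inter> cball v r)
    = (if t < exp (- interaction_energy \<phi> v (x ` {..<k})) then 1 else (0::real))"
  unfolding level_event_def indicator_def
  by (simp add: interaction_energy_inter_cball[OF finite_imageI[OF finite_lessThan]])

lemma borel_measurable_indicator_level_event [measurable]:
  fixes k :: nat
  shows "(\<lambda>x. indicator (level_event \<phi> v t) (x ` {..<k} \<inter> cball v r) :: real)
    \<in> borel_measurable (PiM {..<k} (\<lambda>_. (lborel::'a measure)))"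
  unfolding indicator_level_event_inter_cball by measurable

definition level_average :: "nat \<Rightarrow> 'a \<Rightarrow> nat \<Rightarrow> (nat \<Rightarrow> 'a) \<Rightarrow> real" where
  "level_average N v k x = (1 / real N)
    * (\<Sum>j\<in>{1..N}. indicator (level_event \<phi> v (real j / real N)) (x ` {..<k} \<inter> cball v r))"

lemma borel_measurable_level_average [measurable]:
  "level_average N v k \<in> borel_measurable (PiM {..<k} (\<lambda>_. lborel))"
  unfolding level_average_def[abs_def] by measurable

lemma level_average_bounds:
  assumes "0 < N"
  shows "0 \<le> level_average N v k x \<and> level_average N v k x \<le> 1"
proof -
  have "(\<Sum>j\<in>{1..N}. indicator (level_event \<phi> v (real j / real N)) (x ` {..<k} \<inter> cball v r))
      \<le> (\<Sum>j\<in>{1..N}. 1 :: real)"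
    by (intro sum_mono) simp
  then show ?thesis
    unfolding level_average_def using assms by (simp add: sum_nonneg divide_le_eq)
qed

text \<open>For a configuration of distinct points the insertion weight at \<open>v\<close> only depends on the
  points in \<open>cball v r\<close>, and the level average is its staircase approximation.\<close>

lemma level_average_staircase:
  assumes "inj_on x {..<k}" "0 < N"
  shows "level_average N v k x \<le> insertion_weight \<phi> v k x
    \<and> insertion_weight \<phi> v k x \<le> level_average N v k x + 1 / real N"
proof -
  have "level_average N v k x
      = (1 / real N) * (\<Sum>j\<in>{1..N}. if real j / real N < insertion_weight \<phi> v k x then 1 else 0)"
    unfolding level_average_def indicator_level_event_inter_cball interaction_energy_inj_on[OF assms(1)]
      insertion_weight_def ..
  then show ?thesis
    using staircase_bounds[OF _ _ assms(2)] insertion_weight_bounds[of \<phi>, OF phi_nonneg] by simp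
qed

lemma gibbs_expect_level_average:
  assumes "activity_le lam f" "0 < N"
  shows "gibbs_expect \<phi> f (level_average N v)
    = (1 / real N) * (\<Sum>j\<in>{1..N}. gibbs_prob \<phi> f (cball v r) (level_event \<phi> v (real j / real N)))"
proof -
  interpret bounded_activity \<phi> f lam
    using assms(1) by unfold_locales (auto intro: phi_nonneg)
  let ?H = "\<lambda>j k x. indicator (level_event \<phi> v (real j / real N)) (x ` {..<k} \<inter> cball v r) :: real"
  have "gibbs_expect \<phi> f (level_average N v) = (1 / real N) * gibbs_expect \<phi> f (\<lambda>k x. \<Sum>j\<in>{1..N}. ?H j k x)"
    unfolding level_average_def[abs_def] by (intro gibbs_expect_cmult) (auto intro: sum_nonneg)
  also have "gibbs_expect \<phi> f (\<lambda>k x. \<Sum>j\<in>{1..N}. ?H j k x) = (\<Sum>j\<in>{1..N}. gibbs_expect \<phi> f (?H j))"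
    by (rule gibbs_expect_sum[where c = 1]) auto
  finally show ?thesis
    by (simp add: gibbs_prob_eq_gibbs_expect)
qed

lemma gibbs_expect_insertion_weight_approx:
  fixes f :: "'a \<Rightarrow> real" and v :: 'a
  assumes "activity_le lam f" "0 < N"
  defines "P \<equiv> (1 / real N) * (\<Sum>j\<in>{1..N}. gibbs_prob \<phi> f (cball v r) (level_event \<phi> v (real j / real N)))"
  shows "P \<le> gibbs_expect \<phi> f (insertion_weight \<phi> v)"
    "gibbs_expect \<phi> f (insertion_weight \<phi> v) \<le> P + 1 / real N"
proof -
  interpret bounded_activity \<phi> f lam
    using assms(1) by unfold_locales (auto intro: phi_nonneg)
  let ?D = "level_average N v"
  have staircase_0: "?D 0 x \<le> insertion_weight \<phi> v 0 x \<and> insertion_weight \<phi> v 0 x \<le> ?D 0 x + 1 / real N" for x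
    by (rule level_average_staircase) (simp_all add: assms(2))
  have AE_lower: "AE x in PiM {..<Suc n} (\<lambda>_. lborel). ?D (Suc n) x \<le> insertion_weight \<phi> v (Suc n) x"
    and AE_upper: "AE x in PiM {..<Suc n} (\<lambda>_. lborel). insertion_weight \<phi> v (Suc n) x \<le> ?D (Suc n) x + 1 / real N"
    for n
    using AE_PiM_lborel_inj_on[OF finite_lessThan, of "Suc n"]
    by (eventually_elim, simp add: level_average_staircase assms(2))+
  have "gibbs_expect \<phi> f ?D \<le> gibbs_expect \<phi> f (insertion_weight \<phi> v)"
    using insertion_weight_bounds[of \<phi>, OF phi_nonneg] staircase_0
    by (intro gibbs_expect_mono[of _ _ 1, OF _ AE_lower]) auto
  moreover have "gibbs_expect \<phi> f (insertion_weight \<phi> v) \<le> gibbs_expect \<phi> f (\<lambda>k x. ?D k x + 1 / real N)"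
    using level_average_bounds[OF assms(2)] staircase_0
    by (intro gibbs_expect_mono[of _ _ "1 + 1 / real N", OF _ AE_upper]) auto
  moreover have "gibbs_expect \<phi> f (\<lambda>k x. ?D k x + 1 / real N) = gibbs_expect \<phi> f ?D + 1 / real N"
    using gibbs_expect_add[where h = "\<lambda>k x. 1 / real N" and d = "1 / real N",
        OF borel_measurable_level_average _ level_average_bounds[OF assms(2)]]
      gibbs_expect_const[of "1 / real N"]
    by simp
  ultimately show "P \<le> gibbs_expect \<phi> f (insertion_weight \<phi> v)"
    "gibbs_expect \<phi> f (insertion_weight \<phi> v) \<le> P + 1 / real N"
    unfolding P_def gibbs_expect_level_average[OF assms(1,2), symmetric] by simp_all
qed

lemma rho_fin_diff_le:
  assumes "activity_le lam f" "activity_le lam g" "f v = g v"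
    and "\<And>A. config_event A \<Longrightarrow> \<bar>gibbs_prob \<phi> f (cball v r) A - gibbs_prob \<phi> g (cball v r) A\<bar> \<le> B"
  shows "\<bar>rho_fin \<phi> f v - rho_fin \<phi> g v\<bar> \<le> f v * B"
proof -
  let ?E = "\<lambda>f. gibbs_expect \<phi> f (insertion_weight \<phi> v)"
  let ?P = "\<lambda>f N. (1 / real N) * (\<Sum>j\<in>{1..N}. gibbs_prob \<phi> f (cball v r) (level_event \<phi> v (real j / real N)))"
  have approx: "\<bar>?E f - ?E g\<bar> \<le> B + 1 / real N" if "0 < N" for N
  proof -
    let ?d = "\<lambda>j. gibbs_prob \<phi> f (cball v r) (level_event \<phi> v (real j / real N))
        - gibbs_prob \<phi> g (cball v r) (level_event \<phi> v (real j / real N))"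
    have "\<bar>?P f N - ?P g N\<bar> = (1 / real N) * \<bar>\<Sum>j\<in>{1..N}. ?d j\<bar>"
      unfolding right_diff_distrib[symmetric] sum_subtractf abs_mult by simp
    also have "\<dots> \<le> (1 / real N) * (\<Sum>j\<in>{1..N}. \<bar>?d j\<bar>)"
      by (intro mult_left_mono sum_abs) simp
    also have "\<dots> \<le> (1 / real N) * (\<Sum>j\<in>{1..N}. B)"
      using assms(4)[OF config_event_level_event[OF phi_measurable]]
      by (intro mult_left_mono sum_mono) auto
    also have "\<dots> = B" using \<open>0 < N\<close> by simp
    finally have "\<bar>?P f N - ?P g N\<bar> \<le> B" .
    then show ?thesis
      using gibbs_expect_insertion_weight_approx[OF assms(1) that, of v]
        gibbs_expect_insertion_weight_approx[OF assms(2) that, of v]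
      unfolding abs_le_iff by linarith
  qed
  have E_diff: "\<bar>?E f - ?E g\<bar> \<le> B"
  proof (rule field_le_epsilon)
    fix e :: real assume "0 < e"
    then obtain N :: nat where "0 < N" "inverse (real N) < e"
      using ex_inverse_of_nat_less by blast
    then show "\<bar>?E f - ?E g\<bar> \<le> B + e"
      using approx[of N] by (simp add: inverse_eq_divide)
  qed
  have "0 \<le> f v" using assms(1) by (simp add: activity_le_def)
  then show ?thesis
    unfolding rho_fin_eq_gibbs_expect assms(3)[symmetric] right_diff_distrib[symmetric] abs_mult
    using mult_left_mono[OF E_diff] by simp
qed

end

section \<open>The thermodynamic limit\<close>

lemma rho_fin_translate:
  fixes \<phi> f :: "'a::euclidean_space \<Rightarrow> real"
  assumes [measurable]: "\<phi> \<in> borel_measurable borel" "f \<in> borel_measurable borel"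
  shows "rho_fin \<phi> f v = rho_fin \<phi> (\<lambda>y. f (v + y)) 0"
proof -
  have "gsum \<phi> f (insertion_weight \<phi> v) = gsum \<phi> (\<lambda>y. f (v + y)) (insertion_weight \<phi> 0)"
    by (subst gsum_translate[where v = v]) (simp_all add: insertion_weight_translate)
  moreover have "Zact \<phi> f = Zact \<phi> (\<lambda>y. f (v + y))"
    unfolding Zact_def by (rule gsum_translate[where g = "\<lambda>k x. 1", simplified]) measurable
  ultimately show ?thesis
    unfolding rho_fin_eq_gibbs_expect gibbs_expect_def by simp
qed

lemma activity_le_indicator_translate:
  fixes \<Lambda> :: "'a::euclidean_space set"
  assumes "0 \<le> s" "s \<le> lam" "\<Lambda> \<in> sets borel" "bounded \<Lambda>"
  shows "activity_le lam (\<lambda>x. s * indicator \<Lambda> (v + x))"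
proof -
  have "(\<lambda>x. s * indicator \<Lambda> (v + x)) = (\<lambda>x. s * indicator ((+) v -` \<Lambda>) x)"
    by (auto simp: indicator_def)
  moreover have "(+) v -` \<Lambda> \<in> sets borel"
    using measurable_sets[of "(+) v" borel borel \<Lambda>] assms(3) by simp
  moreover have "(+) v -` \<Lambda> = (\<lambda>y. y - v) ` \<Lambda>"
    by (force simp: algebra_simps)
  then have "bounded ((+) v -` \<Lambda>)"
    using bounded_translation_minus[OF assms(4)] by simp
  ultimately show ?thesis
    using activity_le_indicator[OF assms(1,2)] by simp
qed

lemma ex_exp_decay_less:
  fixes K \<beta> r e :: real
  assumes "0 < \<beta>" "0 < e" "0 \<le> K"
  shows "\<exists>M::nat. \<forall>t\<ge>real M. K * exp (- \<beta> * (t - r)) < e"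
proof (cases "K = 0")
  case False
  then have "0 < K" using assms by simp
  obtain M :: nat where M: "r + ln (K / e) / \<beta> < real M"
    using reals_Archimedean2 by blast
  have "K * exp (- \<beta> * (t - r)) < e" if "t \<ge> real M" for t
  proof -
    have "ln (K / e) / \<beta> < t - r"
      using M that by linarith
    then have "ln (K / e) < \<beta> * (t - r)"
      using assms(1) by (simp add: divide_less_eq mult.commute)
    then have "exp (- \<beta> * (t - r)) < exp (- ln (K / e))" by simp
    also have "exp (- ln (K / e)) = e / K" using \<open>0 < K\<close> assms(2) by (simp add: exp_minus)
    finally show ?thesis using \<open>0 < K\<close> by (simp add: field_simps)
  qed
  then show ?thesis by blast
qed (use assms in auto)

definition centered_box :: "real \<Rightarrow> 'a::euclidean_space set" where
  "centered_box c = cbox (- (c *\<^sub>R One)) (c *\<^sub>R One)"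

lemma sets_centered_box [measurable]: "centered_box c \<in> sets borel"
  unfolding centered_box_def by simp

lemma bounded_centered_box: "bounded (centered_box c)"
  unfolding centered_box_def by (rule bounded_cbox)

lemma measure_centered_box:
  assumes "0 \<le> c"
  shows "measure lborel (centered_box c :: 'a::euclidean_space set) = (2 * c) ^ DIM('a)"
proof -
  have "measure lborel (centered_box c :: 'a set) = (\<Prod>b\<in>(Basis::'a set). (c *\<^sub>R One - - (c *\<^sub>R One)) \<bullet> b)"
    unfolding centered_box_def measure_lborel_cbox_eq using assms by (auto simp: inner_sum_Basis)
  also have "\<dots> = (\<Prod>b\<in>(Basis::'a set). 2 * c)"
    by (intro prod.cong refl) (simp add: inner_sum_Basis algebra_simps)
  finally show ?thesis by simp
qed

lemma centered_box_mono: "c \<le> c' \<Longrightarrow> centered_box c \<subseteq> (centered_box c' :: 'a::euclidean_space set)"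
  unfolding centered_box_def by (auto simp: mem_box inner_sum_Basis) (smt (verit))+

lemma ball_translate_subset_centered_box:
  assumes "0 < L" "v \<in> (centered_box (c - L) :: 'a::euclidean_space set)"
  shows "ball 0 L \<subseteq> {x. v + x \<in> (centered_box c :: 'a set)}"
proof
  fix x :: 'a assume "x \<in> ball 0 L"
  then have "\<bar>x \<bullet> b\<bar> < L" if "b \<in> Basis" for b
    using Basis_le_norm[OF that, of x] by simp
  then show "x \<in> {x. v + x \<in> centered_box c}" using assms(2) unfolding centered_box_def
    by (auto simp: mem_box inner_sum_Basis inner_add_left abs_less_iff) (smt (verit))+
qed

locale ssm_potential = finite_range_potential \<phi> r
  for \<phi> :: "'a::euclidean_space \<Rightarrow> real" and r :: real +
  fixes lam \<alpha> \<beta> :: real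
  assumes phi_symmetric: "\<And>x. \<phi> (- x) = \<phi> x"
    and range_nonneg: "0 \<le> r"
    and lam_pos: "0 < lam"
    and alpha_pos: "0 < \<alpha>" and beta_pos: "0 < \<beta>"
    and ssm_bound: "\<And>f g \<Lambda> A. activity_le lam f \<Longrightarrow> activity_le lam g \<Longrightarrow> \<Lambda> \<in> sets lborel \<Longrightarrow>
      bounded \<Lambda> \<Longrightarrow> config_event A \<Longrightarrow>
      \<bar>gibbs_prob \<phi> f \<Lambda> A - gibbs_prob \<phi> g \<Lambda> A\<bar>
        \<le> \<alpha> * measure lborel \<Lambda> * exp (- \<beta> * setdist \<Lambda> (closure {x. f x \<noteq> g x}))"
begin

lemma finite_volume_centered_box: "finite_volume \<phi> (centered_box c :: 'a set)"
  by unfold_locales (auto intro: phi_nonneg bounded_centered_box)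

definition decay_const :: real where
  "decay_const = \<alpha> * measure lborel (cball (0::'a) r)"

lemma decay_const_nonneg: "0 \<le> decay_const"
  unfolding decay_const_def using alpha_pos by simp

lemma rho_fin_diff_far:
  fixes f g :: "'a \<Rightarrow> real"
  assumes "activity_le lam f" "activity_le lam g" "f 0 = g 0"
    and far: "{x. f x \<noteq> g x} \<subseteq> {x. L \<le> norm x}"
  shows "\<bar>rho_fin \<phi> f 0 - rho_fin \<phi> g 0\<bar> \<le> f 0 * (decay_const * exp (- \<beta> * (L - r)))"
proof (cases "{x. f x \<noteq> g x} = {}")
  case True
  then have "f = g" by auto
  then show ?thesis
    using assms(1) decay_const_nonneg by (simp add: activity_le_def)
next
  case False
  let ?T = "closure {x. f x \<noteq> g x}"
  have T_far: "?T \<subseteq> {x. L \<le> norm x}"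
    using far by (intro closure_minimal) (auto intro: closed_Collect_le continuous_intros)
  have "L - r \<le> setdist (cball 0 r) ?T"
  proof (rule le_setdistI)
    show "cball (0::'a) r \<noteq> {}" using range_nonneg by simp
    show "?T \<noteq> {}" using False closure_subset by blast
    fix a b assume "a \<in> cball (0::'a) r" "b \<in> ?T"
    then have "L \<le> norm b" "norm a \<le> r" using T_far by auto
    moreover have "norm b - norm a \<le> dist a b"
      using norm_triangle_ineq2[of b a] by (simp add: dist_norm norm_minus_commute)
    ultimately show "L - r \<le> dist a b" by linarith
  qed
  then have "exp (- \<beta> * setdist (cball 0 r) ?T) \<le> exp (- \<beta> * (L - r))"
    using beta_pos by simp
  then have "\<alpha> * measure lborel (cball (0::'a) r) * exp (- \<beta> * setdist (cball 0 r) ?T)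
      \<le> decay_const * exp (- \<beta> * (L - r))"
    unfolding decay_const_def using alpha_pos by (simp add: mult_left_mono)
  moreover have "\<bar>rho_fin \<phi> f 0 - rho_fin \<phi> g 0\<bar>
      \<le> f 0 * (\<alpha> * measure lborel (cball (0::'a) r) * exp (- \<beta> * setdist (cball 0 r) ?T))"
    using assms(1-3) by (rule rho_fin_diff_le) (intro ssm_bound assms(1,2); simp)
  moreover have "0 \<le> f 0" using assms(1) by (simp add: activity_le_def)
  ultimately show ?thesis
    by (meson mult_left_mono order_trans)
qed

lemma activity_le_ball: "0 \<le> s \<Longrightarrow> s \<le> lam \<Longrightarrow> activity_le lam (\<lambda>x. s * indicator (ball (0::'a) R) x)"
  by (rule activity_le_indicator) auto

lemma rho_fin_ball_diff:
  assumes "0 < s" "s \<le> lam" "0 < m" "m \<le> m'"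
  shows "\<bar>rho_fin \<phi> (\<lambda>x. s * indicator (ball 0 (real m)) x) 0 - rho_fin \<phi> (\<lambda>x. s * indicator (ball 0 (real m')) x) 0\<bar>
    \<le> s * (decay_const * exp (- \<beta> * (real m - r)))"
proof -
  have "activity_le lam (\<lambda>x. s * indicator (ball (0::'a) (real m)) x)"
    "activity_le lam (\<lambda>x. s * indicator (ball (0::'a) (real m')) x)"
    using assms by (auto intro: activity_le_ball)
  then have "\<bar>rho_fin \<phi> (\<lambda>x. s * indicator (ball 0 (real m)) x) 0 - rho_fin \<phi> (\<lambda>x. s * indicator (ball 0 (real m')) x) 0\<bar>
    \<le> s * indicator (ball (0::'a) (real m)) 0 * (decay_const * exp (- \<beta> * (real m - r)))"
    by (rule rho_fin_diff_far) (use assms in \<open>auto simp: indicator_def\<close>)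
  then show ?thesis using assms by simp
qed

lemma LIMSEQ_rho_fin_ball:
  assumes "0 < s" "s \<le> lam"
  shows "(\<lambda>m. rho_fin \<phi> (\<lambda>x. s * indicator (ball 0 (real m)) x) 0) \<longlonglongrightarrow> rho \<phi> (\<lambda>_. s) 0"
proof -
  let ?b = "\<lambda>m. rho_fin \<phi> (\<lambda>x. s * indicator (ball (0::'a) (real m)) x) 0"
  have "Cauchy ?b"
  proof (rule CauchyI)
    fix e :: real assume "0 < e"
    obtain M :: nat where M: "\<forall>t\<ge>real M. (s * decay_const) * exp (- \<beta> * (t - r)) < e"
      using ex_exp_decay_less[OF beta_pos \<open>0 < e\<close>, of "s * decay_const" r] assms decay_const_nonneg by auto
    have close: "\<bar>?b a - ?b b\<bar> < e" if "Suc M \<le> a" "a \<le> b" for a b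
    proof -
      have "\<bar>?b a - ?b b\<bar> \<le> s * (decay_const * exp (- \<beta> * (real a - r)))"
        using that by (intro rho_fin_ball_diff assms) auto
      also have "\<dots> < e" using M that by (simp add: mult.assoc)
      finally show ?thesis .
    qed
    have "norm (?b m - ?b n) < e" if "m \<ge> Suc M" "n \<ge> Suc M" for m n
      using close[of m n] close[of n m] that by (cases "m \<le> n") (auto simp: abs_minus_commute)
    then show "\<exists>M. \<forall>m\<ge>M. \<forall>n\<ge>M. norm (?b m - ?b n) < e" by blast
  qed
  moreover have "\<not> bounded {x::'a. s \<noteq> 0}"
    using assms by (simp add: not_bounded_UNIV)
  ultimately show ?thesis
    unfolding rho_def by (simp add: Cauchy_convergent_iff convergent_LIMSEQ_iff)
qed

lemma rho_bounds:
  assumes "0 < s" "s \<le> lam"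
  shows "0 \<le> rho \<phi> (\<lambda>_. s) 0" "rho \<phi> (\<lambda>_. s) 0 \<le> s"
proof -
  have "0 \<le> rho_fin \<phi> (\<lambda>x. s * indicator (ball (0::'a) (real m)) x) 0
      \<and> rho_fin \<phi> (\<lambda>x. s * indicator (ball (0::'a) (real m)) x) 0 \<le> s" for m
  proof -
    interpret bounded_activity \<phi> "\<lambda>x. s * indicator (ball (0::'a) (real m)) x" lam
      using assms by unfold_locales (auto intro: phi_nonneg activity_le_ball)
    show ?thesis
      using rho_fin_bounds[of 0] assms by (cases "m = 0") (auto simp: indicator_def)
  qed
  then show "0 \<le> rho \<phi> (\<lambda>_. s) 0" "rho \<phi> (\<lambda>_. s) 0 \<le> s"
    using LIMSEQ_rho_fin_ball[OF assms] by (auto intro: LIMSEQ_le_const LIMSEQ_le_const2)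
qed

text \<open>Translate \<open>v\<close> to the origin and compare both activities with the activity \<open>s\<close> on a
  large ball.\<close>

lemma rho_fin_indicator_near_rho:
  assumes "0 < s" "s \<le> lam" "\<Lambda> \<in> sets borel" "bounded \<Lambda>" "0 < L"
    and inside: "ball 0 L \<subseteq> {x. v + x \<in> \<Lambda>}"
  shows "\<bar>rho_fin \<phi> (\<lambda>x. s * indicator \<Lambda> x) v - rho \<phi> (\<lambda>_. s) 0\<bar>
    \<le> s * (decay_const * exp (- \<beta> * (L - r)))"
proof -
  let ?f = "\<lambda>x. s * indicator \<Lambda> (v + x)"
  let ?b = "\<lambda>m. rho_fin \<phi> (\<lambda>x. s * indicator (ball (0::'a) (real m)) x) 0"
  have "v \<in> \<Lambda>" using subsetD[OF inside, of 0] \<open>0 < L\<close> by simp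
  have "\<bar>rho_fin \<phi> ?f 0 - ?b m\<bar> \<le> s * (decay_const * exp (- \<beta> * (L - r)))" if "L \<le> real m" for m
  proof -
    have agree: "?f x = s * indicator (ball 0 (real m)) x" if "norm x < L" for x
    proof -
      have "v + x \<in> \<Lambda>" using subsetD[OF inside, of x] that by simp
      moreover have "x \<in> ball 0 (real m)" using that \<open>L \<le> real m\<close> by simp
      ultimately show ?thesis by simp
    qed
    have far: "{x. ?f x \<noteq> s * indicator (ball 0 (real m)) x} \<subseteq> {x. L \<le> norm x}"
      using agree by (auto simp: not_less[symmetric])
    have "activity_le lam ?f"
      using assms by (intro activity_le_indicator_translate) auto
    moreover have "activity_le lam (\<lambda>x. s * indicator (ball (0::'a) (real m)) x)"
      using assms by (intro activity_le_ball) auto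
    ultimately show ?thesis
      using rho_fin_diff_far[OF _ _ _ far] \<open>v \<in> \<Lambda>\<close> \<open>0 < L\<close> that by simp
  qed
  moreover have "L \<le> real m" if "nat \<lceil>L\<rceil> \<le> m" for m
    using real_nat_ceiling_ge[of L] of_nat_le_iff[of "nat \<lceil>L\<rceil>" m] that by linarith
  ultimately have "\<forall>m\<ge>nat \<lceil>L\<rceil>. \<bar>rho_fin \<phi> ?f 0 - ?b m\<bar> \<le> s * (decay_const * exp (- \<beta> * (L - r)))"
    by blast
  moreover have "(\<lambda>m. \<bar>rho_fin \<phi> ?f 0 - ?b m\<bar>) \<longlonglongrightarrow> \<bar>rho_fin \<phi> ?f 0 - rho \<phi> (\<lambda>_. s) 0\<bar>"
    by (intro tendsto_intros LIMSEQ_rho_fin_ball assms(1,2))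
  ultimately have "\<bar>rho_fin \<phi> ?f 0 - rho \<phi> (\<lambda>_. s) 0\<bar> \<le> s * (decay_const * exp (- \<beta> * (L - r)))"
    by (intro LIMSEQ_le_const2) blast+
  then show ?thesis
    using rho_fin_translate[of \<phi> "\<lambda>x. s * indicator \<Lambda> x" v] assms(3) by simp
qed

lemma rho_fin_box_pointwise_bound:
  fixes c :: real and v :: 'a
  assumes "0 < s" "s \<le> lam" "0 < L"
  defines "B \<equiv> centered_box c :: 'a set" and "B' \<equiv> centered_box (c - L) :: 'a set"
  shows "\<bar>indicator B v * (rho_fin \<phi> (\<lambda>x. s * indicator B x) v - rho \<phi> (\<lambda>_. s) 0)\<bar>
    \<le> s * (decay_const * exp (- \<beta> * (L - r))) * indicator B v + s * indicator (B - B') v"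
proof -
  let ?G = "rho_fin \<phi> (\<lambda>x. s * indicator B x) v"
  let ?e = "s * (decay_const * exp (- \<beta> * (L - r)))"
  have "0 \<le> ?e" using assms decay_const_nonneg by simp
  show ?thesis
  proof (cases "v \<in> B'")
    case True
    then have "\<bar>?G - rho \<phi> (\<lambda>_. s) 0\<bar> \<le> ?e"
      unfolding B_def B'_def using assms
      by (intro rho_fin_indicator_near_rho ball_translate_subset_centered_box bounded_centered_box) auto
    moreover have "B' \<subseteq> B" unfolding B_def B'_def using assms by (intro centered_box_mono) simp
    ultimately show ?thesis using True by (auto simp: indicator_def)
  next
    case False
    show ?thesis
    proof (cases "v \<in> B")
      case True
      interpret finite_volume \<phi> B
        unfolding B_def by (rule finite_volume_centered_box)
      have "\<bar>?G - rho \<phi> (\<lambda>_. s) 0\<bar> \<le> s"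
        using rho_fin_indicator_bounds[of s v] rho_bounds[OF assms(1,2)] assms(1) True
        by (auto simp: abs_le_iff)
      then show ?thesis using True False \<open>0 \<le> ?e\<close> by simp
    qed (use \<open>0 \<le> ?e\<close> assms(1) in simp)
  qed
qed

lemma set_integral_rho_fin_box_approx:
  assumes "0 < s" "s \<le> lam" "0 < L" "L \<le> c"
  defines "B \<equiv> centered_box c :: 'a set" and "B' \<equiv> centered_box (c - L) :: 'a set"
  shows "\<bar>(LBINT v:B. rho_fin \<phi> (\<lambda>x. s * indicator B x) v) - rho \<phi> (\<lambda>_. s) 0 * measure lborel B\<bar>
    \<le> s * (decay_const * exp (- \<beta> * (L - r))) * measure lborel B + s * (measure lborel B - measure lborel B')"
proof -
  let ?G = "\<lambda>v. rho_fin \<phi> (\<lambda>x. s * indicator B x) v"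
  let ?\<rho> = "rho \<phi> (\<lambda>_. s) 0"
  let ?e = "s * (decay_const * exp (- \<beta> * (L - r)))"
  interpret B: finite_volume \<phi> B
    unfolding B_def by (rule finite_volume_centered_box)
  have "B' \<subseteq> B" unfolding B_def B'_def using assms by (intro centered_box_mono) simp
  have [measurable]: "B' \<in> sets borel" unfolding B'_def by simp
  have integrable_diff: "integrable lborel (indicator (B - B') :: 'a \<Rightarrow> real)"
    using B.emeasure_region by (intro integrable_real_indicator) (auto intro: le_less_trans[OF emeasure_mono])
  have "(LBINT v:B. ?G v) - ?\<rho> * measure lborel B = integral\<^sup>L lborel (\<lambda>v. indicator B v * (?G v - ?\<rho>))"
    using B.integrable_rho_fin_indicator B.integrable_indicator_region assms(1)
    by (simp add: set_lebesgue_integral_def right_diff_distrib)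
  also have "\<bar>\<dots>\<bar> \<le> integral\<^sup>L lborel (\<lambda>v. ?e * indicator B v + s * indicator (B - B') v)"
  proof (rule integral_abs_bound_integral)
    show "integrable lborel (\<lambda>v. indicator B v * (?G v - ?\<rho>))"
      using B.integrable_rho_fin_indicator B.integrable_indicator_region assms(1)
      by (simp add: right_diff_distrib)
    show "integrable lborel (\<lambda>v. ?e * indicator B v + s * indicator (B - B') v)"
      using B.integrable_indicator_region integrable_diff by simp
  qed (use rho_fin_box_pointwise_bound[OF assms(1-3)] in \<open>simp add: B_def B'_def\<close>)
  also have "\<dots> = ?e * measure lborel B + s * measure lborel (B - B')"
    using B.integrable_indicator_region integrable_diff by simp
  also have "measure lborel (B - B') = measure lborel B - measure lborel B'"
    using B.emeasure_region \<open>B' \<subseteq> B\<close> by (intro measure_Diff) auto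
  finally show ?thesis .
qed

abbreviation box_average :: "real \<Rightarrow> nat \<Rightarrow> real" where
  "box_average s n \<equiv> (LBINT v:centered_box (real n). rho_fin \<phi> (\<lambda>x. s * indicator (centered_box (real n)) x) v)
      / measure lborel (centered_box (real n) :: 'a set)"

lemma box_average_approx:
  assumes "0 < s" "s \<le> lam" "0 < L" "L \<le> real n"
  shows "\<bar>box_average s n - rho \<phi> (\<lambda>_. s) 0\<bar>
    \<le> s * (decay_const * exp (- \<beta> * (L - r))) + s * (1 - (1 - L / real n) ^ DIM('a))"
proof -
  define I where "I = (LBINT v:centered_box (real n). rho_fin \<phi> (\<lambda>x. s * indicator (centered_box (real n)) x) v)"
  define \<rho> where "\<rho> = rho \<phi> (\<lambda>_. s) 0"
  define e where "e = s * (decay_const * exp (- \<beta> * (L - r)))"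
  define V where "V = measure lborel (centered_box (real n) :: 'a set)"
  define V' where "V' = measure lborel (centered_box (real n - L) :: 'a set)"
  have "0 < real n" using assms by simp
  then have V: "V = (2 * real n) ^ DIM('a)" and V': "V' = (2 * (real n - L)) ^ DIM('a)"
    unfolding V_def V'_def using assms by (simp_all add: measure_centered_box)
  then have "0 < V" using \<open>0 < real n\<close> by simp
  have "V' / V = ((2 * (real n - L)) / (2 * real n)) ^ DIM('a)"
    unfolding V V' by (simp add: power_divide)
  also have "(2 * (real n - L)) / (2 * real n) = 1 - L / real n"
    using \<open>0 < real n\<close> by (simp add: field_simps)
  finally have V'_V: "V' / V = (1 - L / real n) ^ DIM('a)" .
  have "\<bar>I - \<rho> * V\<bar> \<le> e * V + s * (V - V')"
    unfolding I_def \<rho>_def e_def V_def V'_def by (rule set_integral_rho_fin_box_approx[OF assms])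
  then have "\<bar>I - \<rho> * V\<bar> / V \<le> (e * V + s * (V - V')) / V"
    using \<open>0 < V\<close> by (rule divide_right_mono[OF _ less_imp_le])
  moreover have "\<bar>I / V - \<rho>\<bar> = \<bar>I - \<rho> * V\<bar> / V"
    using \<open>0 < V\<close> by (simp add: field_simps abs_divide)
  moreover have "(e * V + s * (V - V')) / V = e + s * (1 - V' / V)"
    using \<open>0 < V\<close> by (simp add: field_simps)
  ultimately have "\<bar>I / V - \<rho>\<bar> \<le> e + s * (1 - (1 - L / real n) ^ DIM('a))"
    using V'_V by simp
  then show ?thesis
    unfolding I_def \<rho>_def e_def V_def .
qed

lemma box_average_tendsto:
  assumes "0 < s" "s \<le> lam"
  shows "box_average s \<longlonglongrightarrow> rho \<phi> (\<lambda>_. s) 0"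
proof (rule LIMSEQ_I)
  fix e :: real assume "0 < e"
  obtain M :: nat where M: "\<forall>t\<ge>real M. (s * decay_const) * exp (- \<beta> * (t - r)) < e / 2"
    using ex_exp_decay_less[OF beta_pos, of "e / 2" "s * decay_const" r] \<open>0 < e\<close> assms decay_const_nonneg
    by auto
  define L where "L = real M + 1"
  have "0 < L" and decay_small: "s * (decay_const * exp (- \<beta> * (L - r))) < e / 2"
    using M unfolding L_def by (simp_all add: mult.assoc)
  have "(\<lambda>n. s * (1 - (1 - L / real n) ^ DIM('a))) \<longlonglongrightarrow> s * (1 - (1 - 0) ^ DIM('a))"
    by (intro tendsto_intros lim_const_over_n)
  then have "\<forall>\<^sub>F n in sequentially. s * (1 - (1 - L / real n) ^ DIM('a)) < e / 2"
    by (rule order_tendstoD(2)) (use \<open>0 < e\<close> in simp_all)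
  moreover have "\<forall>\<^sub>F n in sequentially. L \<le> real n"
    using eventually_ge_at_top[of "M + 1"] by eventually_elim (simp add: L_def)
  ultimately have "\<forall>\<^sub>F n in sequentially. norm (box_average s n - rho \<phi> (\<lambda>_. s) 0) < e"
  proof eventually_elim
    case (elim n)
    with box_average_approx[OF assms \<open>0 < L\<close>, of n] decay_small show ?case by simp
  qed
  then show "\<exists>N. \<forall>n\<ge>N. norm (box_average s n - rho \<phi> (\<lambda>_. s) 0) < e"
    by (simp add: eventually_sequentially)
qed

definition pressure_deriv :: "nat \<Rightarrow> real \<Rightarrow> real" where
  "pressure_deriv n t = lam * partition_series_deriv \<phi> (centered_box (real n)) (t * lam)
      / partition_series \<phi> (centered_box (real n)) (t * lam) / (2 * real n) ^ DIM('a)"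

lemma continuous_on_pressure_deriv: "continuous_on {0..} (pressure_deriv n)"
proof -
  interpret finite_volume \<phi> "centered_box (real n) :: 'a set"
    by (rule finite_volume_centered_box)
  show ?thesis
    unfolding pressure_deriv_def divide_inverse[of _ "(2 * real n) ^ DIM('a)"]
    using continuous_on_log_deriv_partition_series[OF less_imp_le[OF lam_pos]]
    by (rule continuous_on_mult_right)
qed

lemma press_seq_eq_integral: "press_seq \<phi> lam n = (LBINT t:{0..1}. pressure_deriv n t)"
proof -
  interpret finite_volume \<phi> "centered_box (real n) :: 'a set"
    by (rule finite_volume_centered_box)
  have "press_seq \<phi> lam n = ln (partition_series \<phi> (centered_box (real n)) lam) / (2 * real n) ^ DIM('a)"
    unfolding press_seq_def centered_box_def[symmetric] Zbox_eq_partition_series[OF less_imp_le[OF lam_pos]]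
    using one_le_partition_series[of lam] lam_pos by simp
  then show ?thesis
    unfolding ln_partition_series_eq_integral[OF less_imp_le[OF lam_pos]] pressure_deriv_def
      set_lebesgue_integral_def
    by (simp flip: integral_divide_zero)
qed

lemma pressure_deriv_eq_box_average:
  assumes "1 \<le> n" "0 < t"
  shows "pressure_deriv n t = box_average (t * lam) n / t"
proof -
  interpret finite_volume \<phi> "centered_box (real n) :: 'a set"
    by (rule finite_volume_centered_box)
  have "0 \<le> t * lam" using assms lam_pos by simp
  moreover have "measure lborel (centered_box (real n) :: 'a set) = (2 * real n) ^ DIM('a)"
    by (rule measure_centered_box) simp
  ultimately show ?thesis
    unfolding pressure_deriv_def set_integral_rho_fin_indicator[OF phi_symmetric \<open>0 \<le> t * lam\<close>]
    using assms by (simp add: field_simps)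
qed

lemma pressure_deriv_tendsto:
  assumes "0 < t" "t \<le> 1"
  shows "(\<lambda>n. pressure_deriv n t) \<longlonglongrightarrow> rho \<phi> (\<lambda>_. t * lam) 0 / t"
proof -
  have "0 < t * lam" "t * lam \<le> lam" using assms lam_pos by (auto simp: mult_le_cancel_right1)
  then have "(\<lambda>n. box_average (t * lam) n / t) \<longlonglongrightarrow> rho \<phi> (\<lambda>_. t * lam) 0 / t"
    by (intro tendsto_divide[OF box_average_tendsto tendsto_const]) (use assms in auto)
  moreover have "\<forall>\<^sub>F n in sequentially. box_average (t * lam) n / t = pressure_deriv n t"
    using eventually_ge_at_top[of 1] by eventually_elim (simp add: pressure_deriv_eq_box_average assms)
  ultimately show ?thesis by (rule Lim_transform_eventually)
qed

lemma pressure_deriv_bounds: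
  assumes "0 < t" "t \<le> 1"
  shows "0 \<le> pressure_deriv n t \<and> pressure_deriv n t \<le> lam"
proof (cases "n = 0")
  case True
  then show ?thesis using lam_pos by (simp add: pressure_deriv_def zero_power[OF DIM_positive])
next
  case False
  interpret finite_volume \<phi> "centered_box (real n) :: 'a set"
    by (rule finite_volume_centered_box)
  have "0 < vol"
    using False by (simp add: measure_centered_box)
  moreover have "0 \<le> t * lam" using assms lam_pos by simp
  ultimately have "0 \<le> box_average (t * lam) n" "box_average (t * lam) n \<le> t * lam"
    using set_integral_rho_fin_indicator_bounds[of "t * lam"] by (simp_all add: pos_divide_le_eq)
  moreover have "0 \<le> a / t \<and> a / t \<le> lam" if "0 \<le> a" "a \<le> t * lam" for a
    using assms that by (simp add: pos_divide_le_eq mult.commute)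
  ultimately show ?thesis
    using False assms by (simp only: pressure_deriv_eq_box_average)
qed

lemma press_seq_tendsto: "press_seq \<phi> lam \<longlonglongrightarrow> (LBINT t:{0..1}. rho \<phi> (\<lambda>_. t * lam) 0 / t)"
proof -
  define F where "F n t = indicator {0<..1} t * pressure_deriv n t" for n t
  define G where "G t = indicator {0<..1} t * (rho \<phi> (\<lambda>_. t * lam) 0 / t)" for t :: real
  have F_tendsto: "(\<lambda>n. F n t) \<longlonglongrightarrow> G t" for t
    unfolding F_def G_def using pressure_deriv_tendsto[of t] by (cases "t \<in> {0<..1}") auto
  have indicator_measurable: "(\<lambda>t. indicator S t *\<^sub>R pressure_deriv n t) \<in> borel_measurable borel"
    if "S \<in> sets borel" "S \<subseteq> {0..}" for S n
    using that by (intro borel_measurable_continuous_on_indicator continuous_on_subset[OF continuous_on_pressure_deriv])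
  have F_measurable: "F n \<in> borel_measurable lborel" for n
    using indicator_measurable[of "{0<..1}" n] by (force simp: F_def[abs_def])
  have "(\<lambda>n. integral\<^sup>L lborel (F n)) \<longlonglongrightarrow> integral\<^sup>L lborel G"
  proof (rule integral_dominated_convergence[where w = "\<lambda>t. lam * indicator {0..1} t"])
    show "G \<in> borel_measurable lborel"
      by (rule borel_measurable_LIMSEQ_real[OF F_tendsto F_measurable])
    show "integrable lborel (\<lambda>t. lam * indicator {0..1::real} t)"
      by (intro integrable_mult_right integrable_real_indicator) auto
    show "AE t in lborel. norm (F n t) \<le> lam * indicator {0..1} t" for n
      using pressure_deriv_bounds lam_pos by (intro AE_I2) (auto simp: F_def indicator_def)
  qed (use F_measurable F_tendsto in auto)
  moreover have "integral\<^sup>L lborel (F n) = press_seq \<phi> lam n" for n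
  proof -
    have F_AE: "AE t in lborel. F n t = indicator {0..1} t *\<^sub>R pressure_deriv n t"
      using AE_lborel_singleton[of 0] by eventually_elim (auto simp: F_def indicator_def)
    show ?thesis
      unfolding press_seq_eq_integral set_lebesgue_integral_def
      using integral_cong_AE[OF F_measurable _ F_AE] indicator_measurable[of "{0..1}" n] by simp
  qed
  moreover have "integral\<^sup>L lborel G = (LBINT t:{0..1}. rho \<phi> (\<lambda>_. t * lam) 0 / t)"
    unfolding set_lebesgue_integral_def G_def
    by (intro Bochner_Integration.integral_cong) (auto simp: indicator_def)
  ultimately show ?thesis by simp
qed

end

theorem lemma20:
  fixes \<phi> :: "'a::euclidean_space \<Rightarrow> real" and lam :: real
  assumes "pot_ok \<phi>" and "lam > 0" and "ssm \<phi> lam"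
  shows "press_seq \<phi> lam \<longlonglongrightarrow> (LBINT t:{0..1}. rho \<phi> (\<lambda>_. t * lam) 0 / t)"
proof -
  from assms(1) obtain r where "\<phi> \<in> borel_measurable borel" "\<And>x. \<phi> (- x) = \<phi> x"
    "\<And>x. 0 \<le> \<phi> x" "\<And>x. r < norm x \<Longrightarrow> \<phi> x = 0"
    unfolding pot_ok_def by blast
  moreover from assms(3) obtain \<alpha> \<beta> where "0 < \<alpha>" "0 < \<beta>"
    "\<And>f g \<Lambda> A. activity_le lam f \<Longrightarrow> activity_le lam g \<Longrightarrow> \<Lambda> \<in> sets lborel \<Longrightarrow> bounded \<Lambda> \<Longrightarrow>
      config_event A \<Longrightarrow> \<bar>gibbs_prob \<phi> f \<Lambda> A - gibbs_prob \<phi> g \<Lambda> A\<bar>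
        \<le> \<alpha> * measure lborel \<Lambda> * exp (- \<beta> * setdist \<Lambda> (closure {x. f x \<noteq> g x}))"
    unfolding ssm_def by blast
  ultimately interpret ssm_potential \<phi> "max r 0" lam \<alpha> \<beta>
    using assms(2) by unfold_locales auto
  show ?thesis by (rule press_seq_tendsto)
qed

end
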